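(* (1) For any binary operator $\Box$ on a set $\mathbb D$, any (possibly infinite) system of pure equations $x=f_x$ ($x\in X$), any initial mapping $\rho_0:X\to\mathbb D$ and any unknown $x_0$, if algorithm SLR$_1$ (defined below) terminates, then it returns a partial $\Box$-solution $(\mathsf{dom},\rho)$ with $x_0\in\mathsf{dom}$. (2) If $\mathbb D$ is a directed set, every right-hand side is monotonic, and $\Box=\boxdot$, then for any initial mapping $\rho_0$ and any $x_0$, SLR$_1$ terminates (and thus returns a partial post solution containing $x_0$ in its domain) whenever only finitely many unknowns are ever added to $\mathsf{dom}$ during the run.
   Context: A right-hand side $f$ is pure if it is given as a finite-depth (well-founded) query tree: either $\mathsf{Return}(d)$ with $d\in\mathbb D$, or $\mathsf{Query}(y,k)$ with $y\in X$ and $k:\mathbb D\to$ tree; $f$ is evaluated w.r.t. a lookup function $g:X\to\mathbb D$ by answering each query $y$ with $g(y)$ until a value is returned; $f\rho$ denotes evaluation with $g=\rho$, and $\mathsf{dep}_x\rho$ is the set of unknowns queried when evaluating $f_x\rho$. A partial $\Box$-solution is a pair of a set $\mathsf{dom}\subseteq X$ and $\rho:\mathsf{dom}\to\mathbb D$ such that for all $x\in\mathsf{dom}$: $\mathsf{dep}_x\rho\subseteq\mathsf{dom}$ and $\rho[x]=\rho[x]\,\Box\, f_x\rho$. (Partial post solution: same but $\rho[x]\sqsupseteq f_x\rho$.) Monotonic: $\rho\sqsubseteq\rho'$ pointwise (total maps) implies $f_x\rho\sqsubseteq f_x\rho'$. Algorithm SLR$_1$: global state: set $\mathsf{dom}$,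 map $\rho$ on $\mathsf{dom}$, integer $\mathsf{count}$, map $\mathsf{key}:\mathsf{dom}\to\mathbb Z$, map $\mathsf{infl}$ from unknowns to sets of unknowns (default $\emptyset$), set $\mathsf{stable}$, priority queue $Q$ keyed by $\mathsf{key}$ (no duplicates). $\mathsf{init}(y)$: $\mathsf{dom}:=\mathsf{dom}\cup\{y\}$; $\mathsf{key}[y]:=-\mathsf{count}$; $\mathsf{count}:=\mathsf{count}+1$; $\mathsf{infl}[y]:=\{y\}$; $\rho[y]:=\rho_0[y]$. $\mathsf{eval}(x,y)$: if $y\notin\mathsf{dom}$ then $\mathsf{init}(y)$; $\mathsf{solve}(y)$; end; $\mathsf{infl}[y]:=\mathsf{infl}[y]\cup\{x\}$; return $\rho[y]$. $\mathsf{solve}(x)$: if $x\notin\mathsf{stable}$ then: $\mathsf{stable}:=\mathsf{stable}\cup\{x\}$; $tmp:=\rho[x]\,\Box\, v$ where $v$ is the result of evaluating the tree $f_x$ answering each query $y$ by $\mathsf{eval}(x,y)$ (reading $\rho[x]$ before the evaluation); if $tmp\neq\rho[x]$ then: $W:=\mathsf{infl}[x]\cup\{x\}$; add every $y\in W$ to $Q$; $\rho[x]:=tmp$; $\mathsf{infl}[x]:=\emptyset$; $\mathsf{stable}:=\mathsf{stable}\setminus W$; while $Q\neq\emptyset$ and the minimal key in $Q$ is $\le\mathsf{key}[x]$: remove the element of $Q$ with minimal key and call $\mathsf{solve}$ on it. Main: $\mathsf{stable},\mathsf{dom}:=\emptyset$, $\mathsf{infl}$ empty, $\rho$ empty, $Q$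 empty, $\mathsf{count}:=0$; $\mathsf{init}(x_0)$; $\mathsf{solve}(x_0)$; return $(\mathsf{dom},\rho)$. Widening $\nabla$: $a\sqsubseteq a\nabla b$, $b\sqsubseteq a\nabla b$, no infinite sequence with $a_{i+1}=a_i\nabla b_i\neq a_i$ for all $i$. Narrowing $\triangle$: $b\sqsubseteq a$ implies $b\sqsubseteq a\triangle b\sqsubseteq a$, no infinite sequence with $b_i\sqsubseteq a_i$, $a_{i+1}=a_i\triangle b_i\neq a_i$ for all $i$. $a\boxdot b=a\triangle b$ if $b\sqsubseteq a$, else $a\nabla b$. *)

theory Defs
  imports Main
begin

section \<open>Pure right-hand sides: well-founded query trees\<close>

datatype ('x, 'd) qtree = Return 'd | Query 'x "'d \<Rightarrow> ('x, 'd) qtree"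

primrec tval :: "('x \<Rightarrow> 'd) \<Rightarrow> ('x, 'd) qtree \<Rightarrow> 'd" where
  "tval g (Return d) = d"
| "tval g (Query y k) = tval g (k (g y))"

primrec tdep :: "('x \<Rightarrow> 'd) \<Rightarrow> ('x, 'd) qtree \<Rightarrow> 'x set" where
  "tdep g (Return d) = {}"
| "tdep g (Query y k) = insert y (tdep g (k (g y)))"

definition partial_box_solution ::
  "('d \<Rightarrow> 'd \<Rightarrow> 'd) \<Rightarrow> ('x \<Rightarrow> ('x, 'd) qtree) \<Rightarrow> 'x set \<Rightarrow> ('x \<Rightarrow> 'd) \<Rightarrow> bool" where
  "partial_box_solution box f D \<rho> \<longleftrightarrow>
     (\<forall>x\<in>D. tdep \<rho> (f x) \<subseteq> D \<and> \<rho> x = box (\<rho> x) (tval \<rho> (f x)))"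

definition partial_post_solution ::
  "('x \<Rightarrow> ('x, 'd::order) qtree) \<Rightarrow> 'x set \<Rightarrow> ('x \<Rightarrow> 'd) \<Rightarrow> bool" where
  "partial_post_solution f D \<rho> \<longleftrightarrow>
     (\<forall>x\<in>D. tdep \<rho> (f x) \<subseteq> D \<and> tval \<rho> (f x) \<le> \<rho> x)"

definition monotonic_rhs :: "('x, 'd::order) qtree \<Rightarrow> bool" where
  "monotonic_rhs t \<longleftrightarrow> (\<forall>\<rho> \<rho>'. (\<forall>y. \<rho> y \<le> \<rho>' y) \<longrightarrow> tval \<rho> t \<le> tval \<rho>' t)"

definition directed :: "'d::order itself \<Rightarrow> bool" where
  "directed _ \<longleftrightarrow> (\<forall>a b::'d. \<exists>c. a \<le> c \<and> b \<le> c)"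

definition is_widening :: "('d::order \<Rightarrow> 'd \<Rightarrow> 'd) \<Rightarrow> bool" where
  "is_widening wid \<longleftrightarrow>
     (\<forall>a b. a \<le> wid a b \<and> b \<le> wid a b) \<and>
     \<not> (\<exists>a b :: nat \<Rightarrow> 'd. \<forall>i. a (Suc i) = wid (a i) (b i) \<and> a (Suc i) \<noteq> a i)"

definition is_narrowing :: "('d::order \<Rightarrow> 'd \<Rightarrow> 'd) \<Rightarrow> bool" where
  "is_narrowing nar \<longleftrightarrow>
     (\<forall>a b. b \<le> a \<longrightarrow> b \<le> nar a b \<and> nar a b \<le> a) \<and>
     \<not> (\<exists>a b :: nat \<Rightarrow> 'd. \<forall>i. b i \<le> a i \<and> a (Suc i) = nar (a i) (b i) \<and> a (Suc i) \<noteq> a i)"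

definition boxdot :: "('d::order \<Rightarrow> 'd \<Rightarrow> 'd) \<Rightarrow> ('d \<Rightarrow> 'd \<Rightarrow> 'd) \<Rightarrow> 'd \<Rightarrow> 'd \<Rightarrow> 'd" where
  "boxdot wid nar a b = (if b \<le> a then nar a b else wid a b)"

section \<open>Algorithm SLR1 as a small-step machine\<close>

record ('x, 'd) slr_state =
  sdom :: "'x set"
  srho :: "'x \<Rightarrow> 'd"
  scount :: nat
  skey :: "'x \<Rightarrow> int"
  sinfl :: "'x \<Rightarrow> 'x set"
  sstable :: "'x set"
  sQ :: "'x set"

text \<open>Control frames (an explicit call stack).
  FSolve x: a call solve(x) that has not started yet.
  FTree x old t: inside solve(x), evaluating the remaining tree t; old is rho[x] read before evaluation.
  FResume x old y k: inside solve(x), eval(x,y) has just returned from solve(y); continue with k.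
  FLoop x: the while loop at the end of solve(x).\<close>
datatype ('x, 'd) frame =
    FSolve 'x
  | FTree 'x 'd "('x, 'd) qtree"
  | FResume 'x 'd 'x "'d \<Rightarrow> ('x, 'd) qtree"
  | FLoop 'x

type_synonym ('x, 'd) config = "('x, 'd) frame list \<times> ('x, 'd) slr_state"

definition slr_init :: "('x \<Rightarrow> 'd) \<Rightarrow> 'x \<Rightarrow> ('x, 'd) slr_state \<Rightarrow> ('x, 'd) slr_state" where
  "slr_init \<rho>0 y s = s\<lparr> sdom := insert y (sdom s),
                        skey := (skey s)(y := - int (scount s)),
                        scount := Suc (scount s),
                        sinfl := (sinfl s)(y := {y}),
                        srho := (srho s)(y := \<rho>0 y) \<rparr>"

definition add_infl :: "'x \<Rightarrow> 'x \<Rightarrow> ('x, 'd) slr_state \<Rightarrow> ('x, 'd) slr_state" where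
  "add_infl x y s = s\<lparr> sinfl := (sinfl s)(y := insert x (sinfl s y)) \<rparr>"

definition qmin :: "('x, 'd) slr_state \<Rightarrow> 'x" where
  "qmin s = (SOME y. y \<in> sQ s \<and> (\<forall>z\<in>sQ s. skey s y \<le> skey s z))"

fun slr_step :: "('d \<Rightarrow> 'd \<Rightarrow> 'd) \<Rightarrow> ('x \<Rightarrow> ('x, 'd) qtree) \<Rightarrow> ('x \<Rightarrow> 'd)
                 \<Rightarrow> ('x, 'd) config \<Rightarrow> ('x, 'd) config option" where
  "slr_step box f \<rho>0 ([], s) = None"
| "slr_step box f \<rho>0 (FSolve x # cs, s) =
     (if x \<in> sstable s then Some (cs, s)
      else Some (FTree x (srho s x) (f x) # cs, s\<lparr> sstable := insert x (sstable s) \<rparr>))"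
| "slr_step box f \<rho>0 (FTree x old (Return v) # cs, s) =
     (let tmp = box old v in
      if tmp \<noteq> srho s x then
        (let W = insert x (sinfl s x) in
         Some (FLoop x # cs,
               s\<lparr> sQ := sQ s \<union> W, srho := (srho s)(x := tmp),
                  sinfl := (sinfl s)(x := {}), sstable := sstable s - W \<rparr>))
      else Some (cs, s))"
| "slr_step box f \<rho>0 (FTree x old (Query y k) # cs, s) =
     (if y \<notin> sdom s then Some (FSolve y # FResume x old y k # cs, slr_init \<rho>0 y s)
      else (let s' = add_infl x y s in Some (FTree x old (k (srho s' y)) # cs, s')))"
| "slr_step box f \<rho>0 (FResume x old y k # cs, s) =
     (let s' = add_infl x y s in Some (FTree x old (k (srho s' y)) # cs, s'))"
| "slr_step box f \<rho>0 (FLoop x # cs, s) =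
     (if sQ s \<noteq> {} \<and> skey s (qmin s) \<le> skey s x
      then Some (FSolve (qmin s) # FLoop x # cs, s\<lparr> sQ := sQ s - {qmin s} \<rparr>)
      else Some (cs, s))"

definition slr_start :: "('x \<Rightarrow> 'd) \<Rightarrow> 'x \<Rightarrow> ('x, 'd) config" where
  "slr_start \<rho>0 x0 =
     ([FSolve x0],
      slr_init \<rho>0 x0 \<lparr> sdom = {}, srho = \<rho>0, scount = 0, skey = (\<lambda>_. 0),
                       sinfl = (\<lambda>_. {}), sstable = {}, sQ = {} \<rparr>)"

fun slr_exec :: "('d \<Rightarrow> 'd \<Rightarrow> 'd) \<Rightarrow> ('x \<Rightarrow> ('x, 'd) qtree) \<Rightarrow> ('x \<Rightarrow> 'd)
                 \<Rightarrow> nat \<Rightarrow> ('x, 'd) config \<Rightarrow> ('x, 'd) config" where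
  "slr_exec box f \<rho>0 0 c = c"
| "slr_exec box f \<rho>0 (Suc n) c =
     (case slr_step box f \<rho>0 c of None \<Rightarrow> c | Some c' \<Rightarrow> slr_exec box f \<rho>0 n c')"

definition slr_run :: "('d \<Rightarrow> 'd \<Rightarrow> 'd) \<Rightarrow> ('x \<Rightarrow> ('x, 'd) qtree) \<Rightarrow> ('x \<Rightarrow> 'd) \<Rightarrow> 'x
                       \<Rightarrow> nat \<Rightarrow> ('x, 'd) config" where
  "slr_run box f \<rho>0 x0 n = slr_exec box f \<rho>0 n (slr_start \<rho>0 x0)"

definition slr_finished :: "('d \<Rightarrow> 'd \<Rightarrow> 'd) \<Rightarrow> ('x \<Rightarrow> ('x, 'd) qtree) \<Rightarrow> ('x \<Rightarrow> 'd) \<Rightarrow> 'x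
                       \<Rightarrow> nat \<Rightarrow> bool" where
  "slr_finished box f \<rho>0 x0 n \<longleftrightarrow> fst (slr_run box f \<rho>0 x0 n) = []"

end

theory Submission
  imports Defs "HOL-Library.Infinite_Set"
begin

text \<open>
  Along the run, a machine state is related to the explicit call stack by an
  invariant: keys increase down the stack; every stable unknown that is not under evaluation
  satisfies its equation and is registered in the influence sets of the unknowns it reads; every
  unstable unknown is queued or about to be solved; every queued unknown lies below some pending
  loop. With an empty stack this says that all of \<open>dom\<close> is stable and solved.

  Once \<open>dom\<close> stops growing, each step that changes no value decreases the
  lexicographic measure (queue size, number of unstable unknowns, stack height, remaining query
  tree), so a run that does not terminate changes values infinitely often. Let \<open>x\<close> be the oldest unknown changed
  infinitely often and wait until older unknowns are no longer changed. A narrowing change of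
  \<open>x\<close> makes \<open>x\<close> and all younger unknowns post solved, because by the invariant they satisfy their
  equations; by monotonicity this persists, so all later changes of \<open>x\<close> are narrowings. Hence the
  changes of \<open>x\<close> eventually form an infinite widening or an infinite narrowing sequence.
\<close>

section \<open>Query trees\<close>

inductive query_path :: "('x \<Rightarrow> 'd) \<Rightarrow> ('x, 'd) qtree \<Rightarrow> ('x, 'd) qtree \<Rightarrow> 'x set \<Rightarrow> bool"
  for \<rho> where
  query_path_refl: "query_path \<rho> t t {}"
| query_path_Query: "query_path \<rho> (k (\<rho> y)) t P \<Longrightarrow> query_path \<rho> (Query y k) t (insert y P)"

lemma query_path_tval_tdep:
  "query_path \<rho> T t P \<Longrightarrow> tval \<rho> T = tval \<rho> t \<and> tdep \<rho> T = P \<union> tdep \<rho> t"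
  by (induction rule: query_path.induct) auto

lemma query_path_answer:
  "query_path \<rho> T (Query y k) P \<Longrightarrow> query_path \<rho> T (k (\<rho> y)) (insert y P)"
  by (induction T "Query y k" P rule: query_path.induct)
    (auto intro: query_path.intros simp: insert_commute)

lemma query_path_cong:
  assumes "query_path \<rho> T t P" "\<forall>p\<in>P. \<rho>' p = \<rho> p"
  shows "query_path \<rho>' T t P"
  using assms by (induction rule: query_path.induct) (auto intro: query_path.intros)

lemma tval_tdep_cong:
  "\<forall>y\<in>tdep \<rho> t. \<rho>' y = \<rho> y \<Longrightarrow> tval \<rho>' t = tval \<rho> t \<and> tdep \<rho>' t = tdep \<rho> t"
  by (induction t) auto

section \<open>Call stacks\<close>

fun frame_unknown :: "('x, 'd) frame \<Rightarrow> 'x" where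
  "frame_unknown (FSolve x) = x"
| "frame_unknown (FTree x old t) = x"
| "frame_unknown (FResume x old y k) = x"
| "frame_unknown (FLoop x) = x"

fun frame_unknowns :: "('x, 'd) frame \<Rightarrow> 'x set" where
  "frame_unknowns (FResume x old y k) = {x, y}"
| "frame_unknowns F = {frame_unknown F}"

fun suspended :: "('x, 'd) frame \<Rightarrow> bool" where
  "suspended (FResume x old y k) = True"
| "suspended (FLoop x) = True"
| "suspended _ = False"

text \<open>Frames are listed from the top. Since \<open>init\<close> sets \<open>key[y] := -count\<close>, a smaller key
  means a younger unknown.\<close>
fun valid_stack :: "('x \<Rightarrow> int) \<Rightarrow> 'x \<Rightarrow> ('x, 'd) frame list \<Rightarrow> bool" where
  "valid_stack key x0 [] = True"
| "valid_stack key x0 [F] = (frame_unknown F = x0)"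
| "valid_stack key x0 (F # G # cs) =
     (key (frame_unknown F) \<le> key (frame_unknown G) \<and> suspended G \<and>
      (\<forall>x old y k. G = FResume x old y k \<longrightarrow> frame_unknown F = y \<and> key y < key x) \<and>
      valid_stack key x0 (G # cs))"

lemma valid_stack_below:
  "valid_stack key x0 (F # cs) \<Longrightarrow> G \<in> set cs \<Longrightarrow>
     key (frame_unknown F) \<le> key (frame_unknown G) \<and> suspended G"
proof (induction cs arbitrary: F)
  case (Cons G' cs)
  have "key (frame_unknown F) \<le> key (frame_unknown G')" "suspended G'" "valid_stack key x0 (G' # cs)"
    using Cons.prems(1) by simp_all
  moreover have "G \<noteq> G' \<Longrightarrow> key (frame_unknown G') \<le> key (frame_unknown G) \<and> suspended G"
    using Cons calculation(3) by simp
  ultimately show ?case by (cases "G = G'") auto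
qed simp

lemma valid_stack_suspended: "valid_stack key x0 (F # cs) \<Longrightarrow> G \<in> set cs \<Longrightarrow> suspended G"
  using valid_stack_below by metis

lemma valid_stack_no_FTree: "valid_stack key x0 (F # cs) \<Longrightarrow> FTree x old t \<notin> set cs"
  using valid_stack_suspended by fastforce

lemma valid_stack_no_FSolve: "valid_stack key x0 (F # cs) \<Longrightarrow> FSolve x \<notin> set cs"
  using valid_stack_suspended by fastforce

lemma valid_stack_FResume:
  "valid_stack key x0 (F # cs) \<Longrightarrow> FResume x old y k \<in> set cs \<Longrightarrow>
     key (frame_unknown F) \<le> key y \<and> key y < key x"
proof (induction cs arbitrary: F)
  case (Cons G cs)
  show ?case
  proof (cases "G = FResume x old y k")
    case False
    have "valid_stack key x0 (G # cs)" using Cons.prems(1) by simp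
    then have "key (frame_unknown G) \<le> key y \<and> key y < key x" using Cons False by simp
    then show ?thesis using Cons.prems(1) by simp
  qed (use Cons.prems in simp)
qed simp

lemma valid_stack_tl: "valid_stack key x0 (F # cs) \<Longrightarrow> valid_stack key x0 cs"
  by (cases cs) simp_all

lemma valid_stack_replace_top:
  "valid_stack key x0 (F # cs) \<Longrightarrow> frame_unknown F' = frame_unknown F \<Longrightarrow> valid_stack key x0 (F' # cs)"
  by (cases cs) simp_all

lemma valid_stack_cong:
  "valid_stack key x0 cs \<Longrightarrow> \<forall>F\<in>set cs. \<forall>z\<in>frame_unknowns F. key' z = key z \<Longrightarrow>
     valid_stack key' x0 cs"
proof (induction key x0 cs rule: valid_stack.induct)
  case (3 key x0 F G cs)
  have "key' (frame_unknown F) = key (frame_unknown F)" "key' (frame_unknown G) = key (frame_unknown G)"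
    using 3(3) by (cases F; cases G; auto)+
  moreover have "\<forall>x old y k. G = FResume x old y k \<longrightarrow> key' y = key y \<and> key' x = key x"
    using 3(3) by auto
  ultimately show ?case using 3 by auto
qed auto

lemma valid_stack_cong_top:
  assumes "valid_stack key x0 (F # cs)" "\<forall>G\<in>set cs. \<forall>z\<in>frame_unknowns G. key' z = key z"
    and "key' (frame_unknown F) = key (frame_unknown F)"
  shows "valid_stack key' x0 (F # cs)"
proof (cases cs)
  case (Cons G cs')
  have "valid_stack key' x0 (G # cs')"
    using valid_stack_cong[of key x0 "G # cs'" key'] assms Cons by simp
  moreover have "key' (frame_unknown G) = key (frame_unknown G)" using assms(2) Cons by (cases G) auto
  moreover have "\<forall>x old y k. G = FResume x old y k \<longrightarrow> key' y = key y \<and> key' x = key x"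
    using assms(2) Cons by auto
  ultimately show ?thesis using assms Cons by auto
qed (use assms in simp)

lemma valid_stack_influence_covered:
  assumes "valid_stack key x0 (F # cs)"
    and "\<forall>x old y k. FResume x old y k \<in> set cs \<longrightarrow>
           (\<forall>u\<in>D. key u \<le> key y \<longrightarrow> (\<forall>w\<in>I u. key w \<le> key y))"
    and "\<forall>u\<in>D. \<forall>w\<in>I u. key w \<le> key x0"
    and "u \<in> D" "key u \<le> key (frame_unknown F)" "w \<in> I u"
  shows "key w \<le> key (frame_unknown F) \<or> (\<exists>z. FLoop z \<in> set cs \<and> key w \<le> key z)"
  using assms(1,2,5)
proof (induction cs arbitrary: F)
  case Nil
  then show ?case using assms(3,4,6) by simp
next
  case (Cons G cs)
  have G: "key (frame_unknown F) \<le> key (frame_unknown G)" "suspended G" "valid_stack key x0 (G # cs)"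
    "\<forall>x old y k. G = FResume x old y k \<longrightarrow> frame_unknown F = y"
    using Cons.prems(1) by simp_all
  show ?case
  proof (cases G)
    case (FResume x old y k)
    then have "frame_unknown F = y" "FResume x old y k \<in> set (G # cs)" using G(4) by simp_all
    then have "key w \<le> key (frame_unknown F)" using Cons.prems(2,3) assms(4,6) by metis
    then show ?thesis by simp
  next
    case (FLoop z)
    have "\<forall>x old y k. FResume x old y k \<in> set cs \<longrightarrow>
            (\<forall>u\<in>D. key u \<le> key y \<longrightarrow> (\<forall>w\<in>I u. key w \<le> key y))"
      using Cons.prems(2) by simp
    moreover have "key u \<le> key (frame_unknown G)" using Cons.prems(3) G(1) by simp
    ultimately have "key w \<le> key (frame_unknown G) \<or> (\<exists>z. FLoop z \<in> set cs \<and> key w \<le> key z)"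
      using Cons.IH[OF G(3)] by blast
    then show ?thesis using FLoop by auto
  qed (use G(2) in simp_all)
qed

definition evaluating :: "('x, 'd) frame list \<Rightarrow> 'x set" where
  "evaluating cs = {x. \<exists>old t. FTree x old t \<in> set cs} \<union> {x. \<exists>old y k. FResume x old y k \<in> set cs}"

lemma evaluating_simps [simp]:
  "evaluating [] = {}"
  "evaluating (FSolve x # cs) = evaluating cs"
  "evaluating (FLoop x # cs) = evaluating cs"
  "evaluating (FTree x old t # cs) = insert x (evaluating cs)"
  "evaluating (FResume x old y k # cs) = insert x (evaluating cs)"
  unfolding evaluating_def by (simp_all; blast)+

section \<open>The invariant of SLR\<open>\<^sub>1\<close>\<close>

definition update_value :: "'x \<Rightarrow> 'd \<Rightarrow> ('x, 'd) slr_state \<Rightarrow> ('x, 'd) slr_state" where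
  "update_value x d s = s\<lparr>sQ := sQ s \<union> insert x (sinfl s x), srho := (srho s)(x := d),
     sinfl := (sinfl s)(x := {}), sstable := sstable s - insert x (sinfl s x)\<rparr>"

lemma update_value_sel [simp]:
  "sdom (update_value x d s) = sdom s" "skey (update_value x d s) = skey s"
  "scount (update_value x d s) = scount s" "sQ (update_value x d s) = sQ s \<union> insert x (sinfl s x)"
  "srho (update_value x d s) = (srho s)(x := d)" "sinfl (update_value x d s) = (sinfl s)(x := {})"
  "sstable (update_value x d s) = sstable s - insert x (sinfl s x)"
  by (simp_all add: update_value_def)

lemma add_infl_sel [simp]:
  "sdom (add_infl x y s) = sdom s" "skey (add_infl x y s) = skey s" "sQ (add_infl x y s) = sQ s"
  "srho (add_infl x y s) = srho s" "sstable (add_infl x y s) = sstable s"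
  "scount (add_infl x y s) = scount s" "sinfl (add_infl x y s) = (sinfl s)(y := insert x (sinfl s y))"
  by (simp_all add: add_infl_def)

lemma slr_init_sel [simp]:
  "sdom (slr_init \<rho>0 y s) = insert y (sdom s)" "skey (slr_init \<rho>0 y s) = (skey s)(y := - int (scount s))"
  "sQ (slr_init \<rho>0 y s) = sQ s" "srho (slr_init \<rho>0 y s) = (srho s)(y := \<rho>0 y)"
  "sstable (slr_init \<rho>0 y s) = sstable s" "scount (slr_init \<rho>0 y s) = Suc (scount s)"
  "sinfl (slr_init \<rho>0 y s) = (sinfl s)(y := {y})"
  by (simp_all add: slr_init_def)

lemma slr_step_Return_changed:
  "box old v \<noteq> srho s x \<Longrightarrow>
     slr_step box f \<rho>0 (FTree x old (Return v) # cs, s) = Some (FLoop x # cs, update_value x (box old v) s)"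
  by (simp add: Let_def update_value_def)

lemma qmin_minimal:
  assumes "finite (sQ s)" "sQ s \<noteq> {}"
  shows "qmin s \<in> sQ s \<and> (\<forall>z\<in>sQ s. skey s (qmin s) \<le> skey s z)"
proof -
  have "arg_min_on (skey s) (sQ s) \<in> sQ s \<and> (\<forall>z\<in>sQ s. skey s (arg_min_on (skey s) (sQ s)) \<le> skey s z)"
    using arg_min_if_finite[OF assms, of "skey s"] by (meson not_le)
  then show ?thesis unfolding qmin_def by (rule someI)
qed

definition state_ok :: "'x \<Rightarrow> ('x, 'd) slr_state \<Rightarrow> bool" where
  "state_ok x0 s \<longleftrightarrow> finite (sdom s) \<and> x0 \<in> sdom s \<and> skey s x0 = 0 \<and>
     (\<forall>u\<in>sdom s. - int (scount s) < skey s u \<and> skey s u \<le> 0) \<and> inj_on (skey s) (sdom s) \<and>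
     sstable s \<subseteq> sdom s \<and> sQ s \<subseteq> sdom s \<and> (\<forall>u. sinfl s u \<subseteq> sdom s) \<and> sQ s \<inter> sstable s = {}"

definition stack_ok :: "'x \<Rightarrow> ('x, 'd) frame list \<Rightarrow> ('x, 'd) slr_state \<Rightarrow> bool" where
  "stack_ok x0 cs s \<longleftrightarrow> (\<forall>F\<in>set cs. frame_unknowns F \<subseteq> sdom s) \<and> valid_stack (skey s) x0 cs \<and>
     (\<forall>x rest. cs = FSolve x # rest \<longrightarrow> x \<notin> sQ s)"

definition solved_at :: "('d \<Rightarrow> 'd \<Rightarrow> 'd) \<Rightarrow> ('x \<Rightarrow> ('x, 'd) qtree) \<Rightarrow> ('x, 'd) slr_state \<Rightarrow> 'x \<Rightarrow> bool" where
  "solved_at box f s u \<longleftrightarrow> tdep (srho s) (f u) \<subseteq> sdom s \<and>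
     srho s u = box (srho s u) (tval (srho s) (f u)) \<and> (\<forall>y\<in>tdep (srho s) (f u). u \<in> sinfl s y)"

definition evaluated_upto ::
  "('x \<Rightarrow> ('x, 'd) qtree) \<Rightarrow> ('x, 'd) slr_state \<Rightarrow> 'x \<Rightarrow> ('x, 'd) qtree \<Rightarrow> 'x set \<Rightarrow> bool" where
  "evaluated_upto f s x t P \<longleftrightarrow> query_path (srho s) (f x) t P \<and> P \<subseteq> sdom s \<and> (\<forall>p\<in>P. x \<in> sinfl s p)"

text \<open>The first conjunct says that unknowns no older than \<open>y\<close> only influence unknowns no older
  than \<open>y\<close>: whatever they destabilise is taken care of before \<open>eval(x, y)\<close> returns.\<close>
definition resume_ok ::
  "('x \<Rightarrow> ('x, 'd) qtree) \<Rightarrow> ('x, 'd) slr_state \<Rightarrow> 'x \<Rightarrow> 'd \<Rightarrow> 'x \<Rightarrow> ('d \<Rightarrow> ('x, 'd) qtree) \<Rightarrow> bool" where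
  "resume_ok f s x old y k \<longleftrightarrow>
     (\<forall>u\<in>sdom s. skey s u \<le> skey s y \<longrightarrow> (\<forall>w\<in>sinfl s u. skey s w \<le> skey s y)) \<and>
     (\<forall>u\<in>sdom s. skey s y < skey s u \<longrightarrow> skey s u < skey s x \<longrightarrow> u \<in> sstable s) \<and>
     x \<in> sstable s \<and> old = srho s x \<and>
     (\<exists>P. evaluated_upto f s x (Query y k) P \<and> (\<forall>p\<in>P. skey s y < skey s p))"

fun frame_ok :: "('x \<Rightarrow> ('x, 'd) qtree) \<Rightarrow> ('x, 'd) slr_state \<Rightarrow> ('x, 'd) frame \<Rightarrow> bool" where
  "frame_ok f s (FTree x old t) \<longleftrightarrow> x \<in> sstable s \<and> old = srho s x \<and> (\<exists>P. evaluated_upto f s x t P)"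
| "frame_ok f s (FResume x old y k) \<longleftrightarrow> resume_ok f s x old y k"
| "frame_ok f s _ \<longleftrightarrow> True"

definition stable_solved ::
  "('d \<Rightarrow> 'd \<Rightarrow> 'd) \<Rightarrow> ('x \<Rightarrow> ('x, 'd) qtree) \<Rightarrow> ('x, 'd) frame list \<Rightarrow> ('x, 'd) slr_state \<Rightarrow> bool" where
  "stable_solved box f cs s \<longleftrightarrow> (\<forall>u\<in>sstable s - evaluating cs. solved_at box f s u)"

definition unstable_scheduled :: "('x, 'd) frame list \<Rightarrow> ('x, 'd) slr_state \<Rightarrow> bool" where
  "unstable_scheduled cs s \<longleftrightarrow> (\<forall>u\<in>sdom s - sstable s. u \<in> sQ s \<or> (\<exists>rest. cs = FSolve u # rest))"

definition queue_below_loop :: "('x, 'd) frame list \<Rightarrow> ('x, 'd) slr_state \<Rightarrow> bool" where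
  "queue_below_loop cs s \<longleftrightarrow> (\<forall>w\<in>sQ s. \<exists>z. FLoop z \<in> set cs \<and> skey s w \<le> skey s z)"

definition stable_below_top :: "('x, 'd) frame list \<Rightarrow> ('x, 'd) slr_state \<Rightarrow> bool" where
  "stable_below_top cs s \<longleftrightarrow> (\<forall>F rest. cs = F # rest \<longrightarrow> (\<forall>z. F \<noteq> FLoop z) \<longrightarrow>
     (\<forall>u\<in>sdom s. skey s u < skey s (frame_unknown F) \<longrightarrow> u \<in> sstable s))"

definition slr_invariant ::
  "('d \<Rightarrow> 'd \<Rightarrow> 'd) \<Rightarrow> ('x \<Rightarrow> ('x, 'd) qtree) \<Rightarrow> 'x \<Rightarrow> ('x, 'd) frame list \<Rightarrow> ('x, 'd) slr_state \<Rightarrow> bool" where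
  "slr_invariant box f x0 cs s \<longleftrightarrow> state_ok x0 s \<and> stack_ok x0 cs s \<and> (\<forall>F\<in>set cs. frame_ok f s F) \<and>
     stable_solved box f cs s \<and> unstable_scheduled cs s \<and> queue_below_loop cs s \<and> stable_below_top cs s"

lemma frame_ok_mark_stable:
  "frame_ok f s F \<Longrightarrow> sstable s \<subseteq> S \<Longrightarrow> frame_ok f (s\<lparr>sstable := S\<rparr>) F"
  by (cases F) (auto simp: resume_ok_def evaluated_upto_def)

lemma frame_ok_dequeue: "frame_ok f (s\<lparr>sQ := Q\<rparr>) F = frame_ok f s F"
  by (cases F) (simp_all add: resume_ok_def evaluated_upto_def [abs_def])

lemma solved_at_add_infl: "solved_at box f s u \<Longrightarrow> solved_at box f (add_infl x y s) u"
  by (auto simp: solved_at_def)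

lemma solved_at_update_value:
  assumes "solved_at box f s u" "u \<notin> insert x (sinfl s x)"
  shows "solved_at box f (update_value x d s) u"
proof -
  have "x \<notin> tdep (srho s) (f u)" using assms unfolding solved_at_def by blast
  then have "tval ((srho s)(x := d)) (f u) = tval (srho s) (f u) \<and>
      tdep ((srho s)(x := d)) (f u) = tdep (srho s) (f u)"
    by (intro tval_tdep_cong) auto
  then show ?thesis using assms unfolding solved_at_def by auto
qed

lemma solved_at_init:
  assumes "solved_at box f s u" "u \<noteq> y" "y \<notin> sdom s"
  shows "solved_at box f (slr_init \<rho>0 y s) u"
proof -
  have "y \<notin> tdep (srho s) (f u)" using assms unfolding solved_at_def by blast
  then have "tval ((srho s)(y := \<rho>0 y)) (f u) = tval (srho s) (f u) \<and>
      tdep ((srho s)(y := \<rho>0 y)) (f u) = tdep (srho s) (f u)"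
    by (intro tval_tdep_cong) auto
  then show ?thesis using assms unfolding solved_at_def by auto
qed


lemma frame_unknown_in_frame_unknowns [simp]: "frame_unknown F \<in> frame_unknowns F"
  by (cases F) auto

lemma slr_invariant_pop:
  assumes inv: "slr_invariant box f x0 (F # cs) s"
    and F: "\<forall>z. F \<noteq> FLoop z" "frame_unknown F \<in> sstable s"
    and solved: "\<forall>u\<in>evaluating (F # cs) - evaluating cs. solved_at box f s u"
  shows "slr_invariant box f x0 cs s"
proof -
  have K: "state_ok x0 s" and vs: "valid_stack (skey s) x0 (F # cs)"
    and dom: "\<forall>G\<in>set (F # cs). frame_unknowns G \<subseteq> sdom s" and Fr: "\<forall>G\<in>set (F # cs). frame_ok f s G"
    using inv by (simp_all add: slr_invariant_def stack_ok_def)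
  have "\<forall>x r. cs \<noteq> FSolve x # r" using valid_stack_no_FSolve[OF vs] by (metis list.set_intros(1))
  then have "stack_ok x0 cs s" using dom valid_stack_tl[OF vs] by (simp add: stack_ok_def)
  moreover have "stable_solved box f cs s"
    using inv solved by (auto simp: slr_invariant_def stable_solved_def)
  moreover have "unstable_scheduled cs s"
    using inv F(2) by (auto simp: slr_invariant_def unstable_scheduled_def)
  moreover have "queue_below_loop cs s"
    using inv F(1) by (fastforce simp: slr_invariant_def queue_below_loop_def)
  moreover have "stable_below_top cs s"
    unfolding stable_below_top_def
  proof (intro allI impI ballI)
    fix G r u assume cs: "cs = G # r" and G: "\<forall>z. G \<noteq> FLoop z"
      and u: "u \<in> sdom s" "skey s u < skey s (frame_unknown G)"
    have "suspended G" using valid_stack_suspended[OF vs] cs by simp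
    then obtain x old y k where G_eq: "G = FResume x old y k" using G by (cases G) auto
    have y: "y = frame_unknown F" using vs cs G_eq by simp
    have yd: "y \<in> sdom s" using dom y by auto
    have "resume_ok f s x old y k" using Fr cs G_eq by simp
    then have between: "\<forall>u\<in>sdom s. skey s y < skey s u \<longrightarrow> skey s u < skey s x \<longrightarrow> u \<in> sstable s"
      by (simp add: resume_ok_def)
    have "skey s u = skey s y \<Longrightarrow> u = y" using K u(1) yd by (simp add: state_ok_def inj_on_def)
    then consider "skey s u < skey s y" | "u = y" | "skey s y < skey s u"
      by (cases "skey s u" "skey s y" rule: linorder_cases) auto
    then show "u \<in> sstable s"
    proof cases
      case 1
      then show ?thesis using inv F(1) u(1) y by (auto simp: slr_invariant_def stable_below_top_def)
    next
      case 2
      then show ?thesis using F(2) y by simp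
    next
      case 3
      then show ?thesis using between u G_eq by simp
    qed
  qed
  ultimately show ?thesis using K Fr by (simp add: slr_invariant_def)
qed

lemma slr_invariant_solve_stable:
  "slr_invariant box f x0 (FSolve x # cs) s \<Longrightarrow> x \<in> sstable s \<Longrightarrow> slr_invariant box f x0 cs s"
  by (rule slr_invariant_pop) auto

lemma slr_invariant_solve_unstable:
  assumes inv: "slr_invariant box f x0 (FSolve x # cs) s" and x: "x \<notin> sstable s"
  shows "slr_invariant box f x0 (FTree x (srho s x) (f x) # cs) (s\<lparr>sstable := insert x (sstable s)\<rparr>)"
    (is "slr_invariant _ _ _ ?cs ?s")
proof -
  have K: "state_ok x0 s" and vs: "valid_stack (skey s) x0 (FSolve x # cs)"
    and dom: "\<forall>G\<in>set (FSolve x # cs). frame_unknowns G \<subseteq> sdom s" and xQ: "x \<notin> sQ s"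
    and Fr: "\<forall>G\<in>set cs. frame_ok f s G"
    using inv by (simp_all add: slr_invariant_def stack_ok_def)
  have "state_ok x0 ?s" using K dom xQ by (auto simp: state_ok_def)
  moreover have "stack_ok x0 ?cs ?s"
    using dom valid_stack_replace_top[OF vs] by (auto simp: stack_ok_def)
  moreover have "frame_ok f ?s (FTree x (srho s x) (f x))"
    using query_path_refl[of "srho s" "f x"] by (auto simp: evaluated_upto_def)
  moreover have "\<forall>G\<in>set cs. frame_ok f ?s G" using Fr frame_ok_mark_stable by blast
  moreover have "stable_solved box f ?cs ?s"
    using inv by (auto simp: slr_invariant_def stable_solved_def solved_at_def)
  moreover have "unstable_scheduled ?cs ?s"
    using inv by (auto simp: slr_invariant_def unstable_scheduled_def)
  moreover have "queue_below_loop ?cs ?s"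
    using inv by (auto simp: slr_invariant_def queue_below_loop_def)
  moreover have "stable_below_top ?cs ?s"
    using inv by (auto simp: slr_invariant_def stable_below_top_def)
  ultimately show ?thesis by (simp add: slr_invariant_def)
qed

lemma slr_invariant_return_unchanged:
  assumes inv: "slr_invariant box f x0 (FTree x old (Return v) # cs) s" and unchanged: "box old v = srho s x"
  shows "slr_invariant box f x0 cs s"
proof -
  obtain P where x: "x \<in> sstable s" "old = srho s x" and P: "evaluated_upto f s x (Return v) P"
    using inv by (auto simp: slr_invariant_def)
  then have "solved_at box f s x"
    using query_path_tval_tdep[of "srho s" "f x" "Return v" P] unchanged
    by (auto simp: evaluated_upto_def solved_at_def)
  then show ?thesis by (rule_tac slr_invariant_pop[OF inv]) (use x in auto)
qed

lemma resume_ok_add_infl: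
  "resume_ok f s x' old y' k' \<Longrightarrow> skey s x \<le> skey s y' \<Longrightarrow> resume_ok f (add_infl x y s) x' old y' k'"
  unfolding resume_ok_def by (auto simp: evaluated_upto_def)

text \<open>The step shared by \<open>eval(x, y)\<close> for an old \<open>y\<close> and the return of \<open>solve(y)\<close> inside it.\<close>
lemma slr_invariant_advance:
  assumes inv: "slr_invariant box f x0 (F # cs) s"
    and F: "frame_unknown F = x" "\<forall>z. F \<noteq> FLoop z" "\<forall>z. F \<noteq> FSolve z" and y: "y \<in> sdom s"
    and x: "x \<in> sstable s" "old = srho s x" and P: "evaluated_upto f s x (Query y k) P"
  shows "slr_invariant box f x0 (FTree x old (k (srho s y)) # cs) (add_infl x y s)"
    (is "slr_invariant _ _ _ ?cs ?s")
proof -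
  have K: "state_ok x0 s" and vs: "valid_stack (skey s) x0 (F # cs)"
    and dom: "\<forall>G\<in>set (F # cs). frame_unknowns G \<subseteq> sdom s" and Fr: "\<forall>G\<in>set cs. frame_ok f s G"
    using inv by (simp_all add: slr_invariant_def stack_ok_def)
  have xd: "x \<in> sdom s" using dom F(1) by auto
  have "state_ok x0 ?s" using K xd by (auto simp: state_ok_def)
  moreover have "stack_ok x0 ?cs ?s"
    using dom xd valid_stack_replace_top[OF vs, of "FTree x old (k (srho s y))"] F(1)
    by (auto simp: stack_ok_def)
  moreover have "evaluated_upto f ?s x (k (srho s y)) (insert y P)"
    using P y query_path_answer by (auto simp: evaluated_upto_def)
  then have "frame_ok f ?s (FTree x old (k (srho s y)))" using x by auto
  moreover have "frame_ok f ?s G" if G: "G \<in> set cs" for G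
  proof (cases G)
    case (FResume x' o' y' k')
    have "resume_ok f s x' o' y' k'" using G Fr FResume by auto
    moreover have "skey s x \<le> skey s y'" using valid_stack_FResume[OF vs] G FResume F(1) by blast
    ultimately show ?thesis using FResume resume_ok_add_infl by simp
  qed (use valid_stack_suspended[OF vs G] in auto)
  moreover have "evaluating ?cs = evaluating (F # cs)" using F by (cases F) auto
  then have "stable_solved box f ?cs ?s"
    using inv by (auto simp: slr_invariant_def stable_solved_def intro!: solved_at_add_infl)
  moreover have "unstable_scheduled ?cs ?s"
    using inv F(3) by (auto simp: slr_invariant_def unstable_scheduled_def)
  moreover have "queue_below_loop ?cs ?s"
    using inv F(2) by (fastforce simp: slr_invariant_def queue_below_loop_def)
  moreover have "stable_below_top ?cs ?s"
    using inv F by (auto simp: slr_invariant_def stable_below_top_def)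
  ultimately show ?thesis by (simp add: slr_invariant_def)
qed


lemma state_ok_init:
  assumes K: "state_ok x0 s" and y: "y \<notin> sdom s"
  shows "state_ok x0 (slr_init \<rho>0 y s)"
proof -
  let ?k = "(skey s)(y := - int (scount s))"
  have keys: "\<forall>u\<in>sdom s. - int (scount s) < skey s u \<and> skey s u \<le> 0" using K by (simp add: state_ok_def)
  have same: "\<forall>u\<in>sdom s. ?k u = skey s u" using y by auto
  have "?k y \<notin> ?k ` sdom s" using keys same by force
  then have "inj_on ?k (insert y (sdom s))"
    using K y inj_on_cong[of "sdom s" ?k "skey s"] same by (auto simp: state_ok_def)
  moreover have "\<forall>u\<in>insert y (sdom s). - int (Suc (scount s)) < ?k u \<and> ?k u \<le> 0" using keys by auto
  ultimately show ?thesis using K y by (auto simp: state_ok_def)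
qed

lemma evaluated_upto_init:
  assumes "evaluated_upto f s x t P" "y \<notin> sdom s"
  shows "evaluated_upto f (slr_init \<rho>0 y s) x t P"
proof -
  have "\<forall>p\<in>P. p \<noteq> y" using assms by (auto simp: evaluated_upto_def)
  then show ?thesis using assms query_path_cong[of "srho s" "f x" t P "(srho s)(y := \<rho>0 y)"]
    by (auto simp: evaluated_upto_def)
qed

text \<open>The pending \<open>eval(x, y)\<close> pushed when \<open>y\<close> is new; \<open>y\<close> is the youngest unknown.\<close>
lemma resume_ok_init_fresh:
  assumes K: "state_ok x0 s" and y: "y \<notin> sdom s" and xd: "x \<in> sdom s"
    and x: "x \<in> sstable s" "old = srho s x" and P: "evaluated_upto f s x (Query y k) P"
    and below: "\<forall>u\<in>sdom s. skey s u < skey s x \<longrightarrow> u \<in> sstable s"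
  shows "resume_ok f (slr_init \<rho>0 y s) x old y k"
    (is "resume_ok f ?s x old y k")
proof -
  have keys: "\<forall>u\<in>sdom s. - int (scount s) < skey s u" using K by (simp add: state_ok_def)
  have xy: "x \<noteq> y" using xd y by blast
  have "\<forall>u\<in>sdom ?s. skey ?s u \<le> skey ?s y \<longrightarrow> (\<forall>w\<in>sinfl ?s u. skey ?s w \<le> skey ?s y)"
  proof (intro ballI impI)
    fix u w assume u: "u \<in> sdom ?s" "skey ?s u \<le> skey ?s y" and w: "w \<in> sinfl ?s u"
    have "u = y" using u keys by (cases "u = y") force+
    then show "skey ?s w \<le> skey ?s y" using w by simp
  qed
  moreover have "\<forall>u\<in>sdom ?s. skey ?s y < skey ?s u \<longrightarrow> skey ?s u < skey ?s x \<longrightarrow> u \<in> sstable ?s"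
    using below xy by auto
  moreover have "\<forall>p\<in>P. skey ?s y < skey ?s p" using P keys y by (auto simp: evaluated_upto_def)
  moreover have "x \<in> sstable ?s" "old = srho ?s x" using x xy by simp_all
  ultimately show ?thesis using evaluated_upto_init[OF P y] unfolding resume_ok_def by blast
qed

lemma resume_ok_init:
  assumes R: "resume_ok f s x old z k" and K: "state_ok x0 s" and y: "y \<notin> sdom s"
    and d: "x \<in> sdom s" "z \<in> sdom s"
  shows "resume_ok f (slr_init \<rho>0 y s) x old z k"
    (is "resume_ok f ?s x old z k")
proof -
  have keys: "\<forall>u\<in>sdom s. - int (scount s) < skey s u" and infl: "\<forall>u. sinfl s u \<subseteq> sdom s"
    using K by (simp_all add: state_ok_def)
  have R1: "\<forall>u\<in>sdom s. skey s u \<le> skey s z \<longrightarrow> (\<forall>w\<in>sinfl s u. skey s w \<le> skey s z)"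
    and R2: "\<forall>u\<in>sdom s. skey s z < skey s u \<longrightarrow> skey s u < skey s x \<longrightarrow> u \<in> sstable s"
    and R3: "x \<in> sstable s" "old = srho s x"
    and R4: "\<exists>P. evaluated_upto f s x (Query z k) P \<and> (\<forall>p\<in>P. skey s z < skey s p)"
    using R unfolding resume_ok_def by blast+
  have same: "skey ?s u = skey s u" if "u \<in> sdom s" for u using that y by auto
  have "\<forall>u\<in>sdom ?s. skey ?s u \<le> skey ?s z \<longrightarrow> (\<forall>w\<in>sinfl ?s u. skey ?s w \<le> skey ?s z)"
  proof (intro ballI impI)
    fix u w assume u: "u \<in> sdom ?s" "skey ?s u \<le> skey ?s z" and w: "w \<in> sinfl ?s u"
    show "skey ?s w \<le> skey ?s z"
    proof (cases "u = y")
      case True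
      then show ?thesis using w u(2) by simp
    next
      case False
      have ud: "u \<in> sdom s" using u(1) False by simp
      have wi: "w \<in> sinfl s u" using w False by simp
      have wd: "w \<in> sdom s" using wi infl by blast
      have "skey s u \<le> skey s z" using u(2) same[OF ud] same[OF d(2)] by simp
      then have "skey s w \<le> skey s z" using R1 ud wi by blast
      then show ?thesis using same[OF wd] same[OF d(2)] by simp
    qed
  qed
  moreover have "\<forall>u\<in>sdom ?s. skey ?s z < skey ?s u \<longrightarrow> skey ?s u < skey ?s x \<longrightarrow> u \<in> sstable ?s"
  proof (intro ballI impI)
    fix u assume u: "u \<in> sdom ?s" "skey ?s z < skey ?s u" "skey ?s u < skey ?s x"
    have "u \<noteq> y" using u(2) keys d(2) same[OF d(2)] by auto
    then have ud: "u \<in> sdom s" using u(1) by simp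
    then show "u \<in> sstable ?s" using R2 u same[OF ud] same[OF d(1)] same[OF d(2)] by simp
  qed
  moreover have "\<exists>P. evaluated_upto f ?s x (Query z k) P \<and> (\<forall>p\<in>P. skey ?s z < skey ?s p)"
  proof -
    obtain P where P: "evaluated_upto f s x (Query z k) P" "\<forall>p\<in>P. skey s z < skey s p"
      using R4 by blast
    have "\<forall>p\<in>P. skey ?s z < skey ?s p" using P same d(2) y by (auto simp: evaluated_upto_def)
    then show ?thesis using evaluated_upto_init[OF P(1) y] by blast
  qed
  moreover have "x \<in> sstable ?s" "old = srho ?s x" using R3 d y by auto
  ultimately show ?thesis unfolding resume_ok_def by (intro conjI) (assumption+)
qed

lemma stack_ok_init:
  assumes S: "stack_ok x0 (FTree x old (Query y k) # cs) s" and K: "state_ok x0 s" and y: "y \<notin> sdom s"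
  shows "stack_ok x0 (FSolve y # FResume x old y k # cs) (slr_init \<rho>0 y s)"
    (is "stack_ok x0 ?cs ?s")
proof -
  have vs: "valid_stack (skey s) x0 (FTree x old (Query y k) # cs)"
    and dom: "\<forall>G\<in>set (FTree x old (Query y k) # cs). frame_unknowns G \<subseteq> sdom s"
    using S by (simp_all add: stack_ok_def)
  have xd: "x \<in> sdom s" using dom by simp
  have keys: "\<forall>u\<in>sdom s. - int (scount s) < skey s u" and Qd: "sQ s \<subseteq> sdom s"
    using K by (simp_all add: state_ok_def)
  have same: "skey ?s u = skey s u" if "u \<in> sdom s" for u using that y by auto
  have "valid_stack (skey ?s) x0 (FResume x old y k # cs)"
  proof (rule valid_stack_cong_top)
    show "valid_stack (skey s) x0 (FResume x old y k # cs)" using valid_stack_replace_top[OF vs] by simp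
    show "\<forall>G\<in>set cs. \<forall>z\<in>frame_unknowns G. skey ?s z = skey s z"
    proof (intro ballI)
      fix G z assume "G \<in> set cs" "z \<in> frame_unknowns G"
      then have "z \<in> sdom s" using dom by auto
      then show "skey ?s z = skey s z" by (rule same)
    qed
  qed (use same[OF xd] in simp)
  moreover have "skey ?s y < skey ?s x" using keys xd y by auto
  moreover have "\<forall>G\<in>set ?cs. frame_unknowns G \<subseteq> sdom ?s" using dom xd by auto
  moreover have "y \<notin> sQ ?s" using Qd y by auto
  ultimately show ?thesis by (simp add: stack_ok_def)
qed

lemma slr_invariant_query_new:
  assumes inv: "slr_invariant box f x0 (FTree x old (Query y k) # cs) s" and y: "y \<notin> sdom s"
  shows "slr_invariant box f x0 (FSolve y # FResume x old y k # cs) (slr_init \<rho>0 y s)"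
    (is "slr_invariant _ _ _ ?cs ?s")
proof -
  have K: "state_ok x0 s" and S: "stack_ok x0 (FTree x old (Query y k) # cs) s"
    and Fr: "\<forall>G\<in>set (FTree x old (Query y k) # cs). frame_ok f s G"
    and T: "stable_below_top (FTree x old (Query y k) # cs) s"
    and St: "stable_solved box f (FTree x old (Query y k) # cs) s"
    and U: "unstable_scheduled (FTree x old (Query y k) # cs) s"
    and Q: "queue_below_loop (FTree x old (Query y k) # cs) s"
    using inv unfolding slr_invariant_def by blast+
  have vs: "valid_stack (skey s) x0 (FTree x old (Query y k) # cs)"
    and dom: "\<forall>G\<in>set (FTree x old (Query y k) # cs). frame_unknowns G \<subseteq> sdom s"
    using S by (simp_all add: stack_ok_def)
  have below: "\<forall>u\<in>sdom s. skey s u < skey s x \<longrightarrow> u \<in> sstable s"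
    using T by (simp add: stable_below_top_def)
  have xd: "x \<in> sdom s" using dom by simp
  have keys: "\<forall>u\<in>sdom s. - int (scount s) < skey s u" and Qd: "sQ s \<subseteq> sdom s"
    using K by (simp_all add: state_ok_def)
  have same: "skey ?s u = skey s u" if "u \<in> sdom s" for u using that y by auto
  have "state_ok x0 ?s" by (rule state_ok_init[OF K y])
  moreover have "stack_ok x0 ?cs ?s" by (rule stack_ok_init[OF S K y])
  moreover have "\<forall>G\<in>set ?cs. frame_ok f ?s G"
  proof -
    obtain P where "x \<in> sstable s" "old = srho s x" "evaluated_upto f s x (Query y k) P" using Fr by auto
    then have "resume_ok f ?s x old y k" by (rule resume_ok_init_fresh[OF K y xd _ _ _ below])
    moreover have "frame_ok f ?s G" if G: "G \<in> set cs" for G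
    proof (cases G)
      case (FResume x' o' y' k')
      have "resume_ok f s x' o' y' k'" using G Fr FResume by auto
      moreover have "x' \<in> sdom s" "y' \<in> sdom s" using G dom FResume by auto
      ultimately show ?thesis using FResume resume_ok_init[OF _ K y] by simp
    qed (use valid_stack_suspended[OF vs G] in auto)
    ultimately show ?thesis by auto
  qed
  moreover have "stable_solved box f ?cs ?s"
    unfolding stable_solved_def
  proof
    fix u assume u: "u \<in> sstable ?s - evaluating ?cs"
    then have "u \<noteq> y" using K y by (auto simp: state_ok_def)
    then show "solved_at box f ?s u" using St u y by (auto simp: stable_solved_def intro!: solved_at_init)
  qed
  moreover have "unstable_scheduled ?cs ?s"
    using U by (auto simp: unstable_scheduled_def)
  moreover have "queue_below_loop ?cs ?s"
    unfolding queue_below_loop_def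
  proof
    fix w assume "w \<in> sQ ?s"
    then have w: "w \<in> sQ s" by simp
    then obtain z where z: "FLoop z \<in> set cs" "skey s w \<le> skey s z"
      using Q by (auto simp: queue_below_loop_def)
    have "w \<in> sdom s" "z \<in> sdom s" using w Qd dom z(1) by auto
    then show "\<exists>z. FLoop z \<in> set ?cs \<and> skey ?s w \<le> skey ?s z"
      using z same by (intro exI[of _ z]) simp
  qed
  moreover have "\<not> skey ?s u < skey ?s y" if "u \<in> sdom ?s" for u
    using that keys y by (cases "u = y") auto
  then have "stable_below_top ?cs ?s" by (simp add: stable_below_top_def)
  ultimately show ?thesis by (simp add: slr_invariant_def)
qed


lemma resume_ok_update_value:
  assumes R: "resume_ok f s x' old y' k'" and xd: "x \<in> sdom s"
    and keys: "skey s x \<le> skey s y'" "skey s y' < skey s x'"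
  shows "resume_ok f (update_value x d s) x' old y' k'"
    (is "resume_ok f ?s x' old y' k'")
proof -
  have R1: "\<forall>u\<in>sdom s. skey s u \<le> skey s y' \<longrightarrow> (\<forall>w\<in>sinfl s u. skey s w \<le> skey s y')"
    and R2: "\<forall>u\<in>sdom s. skey s y' < skey s u \<longrightarrow> skey s u < skey s x' \<longrightarrow> u \<in> sstable s"
    and R3: "x' \<in> sstable s" "old = srho s x'"
    and R4: "\<exists>P. evaluated_upto f s x' (Query y' k') P \<and> (\<forall>p\<in>P. skey s y' < skey s p)"
    using R unfolding resume_ok_def by blast+
  have W: "\<forall>w\<in>insert x (sinfl s x). skey s w \<le> skey s y'" using R1 xd keys(1) by auto
  have "\<forall>u\<in>sdom ?s. skey ?s u \<le> skey ?s y' \<longrightarrow> (\<forall>w\<in>sinfl ?s u. skey ?s w \<le> skey ?s y')"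
    using R1 by auto
  moreover have "\<forall>u\<in>sdom ?s. skey ?s y' < skey ?s u \<longrightarrow> skey ?s u < skey ?s x' \<longrightarrow> u \<in> sstable ?s"
    using R2 W by force
  moreover have "x' \<in> sstable ?s" "old = srho ?s x'" using R3 W keys by auto
  moreover have "\<exists>P. evaluated_upto f ?s x' (Query y' k') P \<and> (\<forall>p\<in>P. skey ?s y' < skey ?s p)"
  proof -
    obtain P where P: "evaluated_upto f s x' (Query y' k') P" "\<forall>p\<in>P. skey s y' < skey s p"
      using R4 by blast
    have "x \<notin> P" using P(2) keys(1) by force
    then have "evaluated_upto f ?s x' (Query y' k') P"
      using P(1) query_path_cong[of "srho s" "f x'" "Query y' k'" P "(srho s)(x := d)"]
      by (auto simp: evaluated_upto_def)
    then show ?thesis using P(2) by auto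
  qed
  ultimately show ?thesis unfolding resume_ok_def by (intro conjI) (assumption+)
qed

lemma influence_below_loop:
  assumes K: "state_ok x0 s" and vs: "valid_stack (skey s) x0 (F # cs)"
    and Fr: "\<forall>G\<in>set cs. frame_ok f s G"
    and x: "frame_unknown F \<in> sdom s" and w: "w \<in> sinfl s (frame_unknown F)"
  shows "skey s w \<le> skey s (frame_unknown F) \<or> (\<exists>z. FLoop z \<in> set cs \<and> skey s w \<le> skey s z)"
proof -
  have "\<forall>x' o' y' k'. FResume x' o' y' k' \<in> set cs \<longrightarrow>
          (\<forall>u\<in>sdom s. skey s u \<le> skey s y' \<longrightarrow> (\<forall>w\<in>sinfl s u. skey s w \<le> skey s y'))"
    using Fr by (fastforce simp: resume_ok_def)
  moreover have "\<forall>u\<in>sdom s. \<forall>w\<in>sinfl s u. skey s w \<le> skey s x0"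
    using K by (fastforce simp: state_ok_def)
  ultimately show ?thesis
    by (rule valid_stack_influence_covered[OF vs, where u = "frame_unknown F"]) (use x w in simp_all)
qed

lemma slr_invariant_return_changed:
  assumes inv: "slr_invariant box f x0 (FTree x old (Return v) # cs) s"
  shows "slr_invariant box f x0 (FLoop x # cs) (update_value x d s)"
    (is "slr_invariant _ _ _ ?cs ?s")
proof -
  let ?W = "insert x (sinfl s x)"
  have K: "state_ok x0 s" and S: "stack_ok x0 (FTree x old (Return v) # cs) s"
    and Fr0: "\<forall>G\<in>set (FTree x old (Return v) # cs). frame_ok f s G"
    and St: "stable_solved box f (FTree x old (Return v) # cs) s"
    and U: "unstable_scheduled (FTree x old (Return v) # cs) s"
    and Q: "queue_below_loop (FTree x old (Return v) # cs) s"
    using inv unfolding slr_invariant_def by blast+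
  have Fr: "\<forall>G\<in>set cs. frame_ok f s G" using Fr0 by simp
  have vs: "valid_stack (skey s) x0 (FTree x old (Return v) # cs)"
    and dom: "\<forall>G\<in>set (FTree x old (Return v) # cs). frame_unknowns G \<subseteq> sdom s"
    using S by (simp_all add: stack_ok_def)
  have xd: "x \<in> sdom s" using dom by simp
  have infl: "\<forall>u. sinfl s u \<subseteq> sdom s" using K by (simp add: state_ok_def)
  have "state_ok x0 ?s" using K xd infl by (auto simp: state_ok_def)
  moreover have "stack_ok x0 ?cs ?s"
    using dom valid_stack_replace_top[OF vs, of "FLoop x"] by (simp add: stack_ok_def)
  moreover have "frame_ok f ?s G" if G: "G \<in> set cs" for G
  proof (cases G)
    case (FResume x' o' y' k')
    have "resume_ok f s x' o' y' k'" using G Fr FResume by auto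
    then show ?thesis using FResume resume_ok_update_value[OF _ xd] valid_stack_FResume[OF vs] G by simp
  qed (use valid_stack_suspended[OF vs G] in auto)
  moreover have "stable_solved box f ?cs ?s"
    unfolding stable_solved_def
  proof
    fix u assume u: "u \<in> sstable ?s - evaluating ?cs"
    then have "u \<notin> ?W" "u \<in> sstable s - evaluating (FTree x old (Return v) # cs)" by auto
    then show "solved_at box f ?s u"
      using St by (intro solved_at_update_value) (auto simp: stable_solved_def)
  qed
  moreover have "unstable_scheduled ?cs ?s"
    using U by (auto simp: unstable_scheduled_def)
  moreover have "queue_below_loop ?cs ?s"
    unfolding queue_below_loop_def
  proof
    fix w assume "w \<in> sQ ?s"
    then consider "w \<in> sQ s" | "w = x" | "w \<in> sinfl s x" by auto
    then show "\<exists>z. FLoop z \<in> set ?cs \<and> skey ?s w \<le> skey ?s z"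
    proof cases
      case 1
      then show ?thesis using Q by (auto simp: queue_below_loop_def)
    next
      case 2
      then show ?thesis by auto
    next
      case 3
      then show ?thesis using influence_below_loop[OF K vs Fr, of w] xd by auto
    qed
  qed
  moreover have "stable_below_top ?cs ?s" by (simp add: stable_below_top_def)
  ultimately show ?thesis using Fr by (simp add: slr_invariant_def)
qed


lemma slr_invariant_loop_push:
  assumes inv: "slr_invariant box f x0 (FLoop x # cs) s"
    and Q: "sQ s \<noteq> {}" "skey s (qmin s) \<le> skey s x"
  shows "slr_invariant box f x0 (FSolve (qmin s) # FLoop x # cs) (s\<lparr>sQ := sQ s - {qmin s}\<rparr>)"
    (is "slr_invariant _ _ _ ?cs ?s")
proof -
  let ?m = "qmin s"
  have K: "state_ok x0 s" and S: "stack_ok x0 (FLoop x # cs) s"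
    and Fr: "\<forall>G\<in>set (FLoop x # cs). frame_ok f s G"
    and St: "stable_solved box f (FLoop x # cs) s"
    and U: "unstable_scheduled (FLoop x # cs) s"
    and Qb: "queue_below_loop (FLoop x # cs) s"
    using inv unfolding slr_invariant_def by blast+
  have "finite (sQ s)" using K finite_subset by (auto simp: state_ok_def)
  then have m: "?m \<in> sQ s" "\<forall>z\<in>sQ s. skey s ?m \<le> skey s z" using qmin_minimal Q(1) by blast+
  have md: "?m \<in> sdom s" using m K by (auto simp: state_ok_def)
  have "state_ok x0 ?s" using K by (auto simp: state_ok_def)
  moreover have "stack_ok x0 ?cs ?s" using S Q(2) md by (auto simp: stack_ok_def)
  moreover have "\<forall>G\<in>set ?cs. frame_ok f ?s G" using Fr by (simp add: frame_ok_dequeue)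
  moreover have "stable_solved box f ?cs ?s" using St by (simp add: stable_solved_def solved_at_def)
  moreover have "unstable_scheduled ?cs ?s" using U by (auto simp: unstable_scheduled_def)
  moreover have "queue_below_loop ?cs ?s" using Qb by (auto simp: queue_below_loop_def)
  moreover have "stable_below_top ?cs ?s"
    unfolding stable_below_top_def
  proof (intro allI impI ballI)
    fix F r u assume "?cs = F # r" and u: "u \<in> sdom ?s" "skey ?s u < skey ?s (frame_unknown F)"
    then have "skey s u < skey s ?m" by auto
    then have "u \<notin> sQ s" using m(2) by force
    then show "u \<in> sstable ?s" using U u(1) by (auto simp: unstable_scheduled_def)
  qed
  ultimately show ?thesis by (simp add: slr_invariant_def)
qed

lemma slr_invariant_loop_exit:
  assumes inv: "slr_invariant box f x0 (FLoop x # cs) s"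
    and Q: "\<not> (sQ s \<noteq> {} \<and> skey s (qmin s) \<le> skey s x)"
  shows "slr_invariant box f x0 cs s"
proof -
  have K: "state_ok x0 s" and S: "stack_ok x0 (FLoop x # cs) s"
    and Fr: "\<forall>G\<in>set (FLoop x # cs). frame_ok f s G"
    and St: "stable_solved box f (FLoop x # cs) s"
    and U: "unstable_scheduled (FLoop x # cs) s"
    and Qb: "queue_below_loop (FLoop x # cs) s"
    using inv unfolding slr_invariant_def by blast+
  have vs: "valid_stack (skey s) x0 (FLoop x # cs)" using S by (simp add: stack_ok_def)
  have fq: "finite (sQ s)" using K finite_subset by (auto simp: state_ok_def)
  have late: "skey s x < skey s w" if "w \<in> sQ s" for w
    using that Q qmin_minimal[OF fq] by force
  have unstable_queued: "u \<in> sQ s" if "u \<in> sdom s" "u \<notin> sstable s" for u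
    using U that by (auto simp: unstable_scheduled_def)
  have "\<forall>x r. cs \<noteq> FSolve x # r" using valid_stack_no_FSolve[OF vs] by (metis list.set_intros(1))
  then have "stack_ok x0 cs s" using S valid_stack_tl[OF vs] by (simp add: stack_ok_def)
  moreover have "queue_below_loop cs s"
    unfolding queue_below_loop_def
  proof
    fix w assume w: "w \<in> sQ s"
    then obtain z where z: "FLoop z \<in> set (FLoop x # cs)" "skey s w \<le> skey s z"
      using Qb by (auto simp: queue_below_loop_def)
    have "z \<noteq> x" using z(2) late[OF w] by auto
    then show "\<exists>z. FLoop z \<in> set cs \<and> skey s w \<le> skey s z" using z by auto
  qed
  moreover have "stable_below_top cs s"
    unfolding stable_below_top_def
  proof (intro allI impI ballI)
    fix G r u assume cs: "cs = G # r" and G: "\<forall>z. G \<noteq> FLoop z"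
      and u: "u \<in> sdom s" "skey s u < skey s (frame_unknown G)"
    have "suspended G" using valid_stack_suspended[OF vs] cs by simp
    then obtain x' old y k where G_eq: "G = FResume x' old y k" using G by (cases G) auto
    have y: "y = x" using vs cs G_eq by simp
    have "resume_ok f s x' old y k" using Fr cs G_eq by simp
    then have between: "\<forall>u\<in>sdom s. skey s y < skey s u \<longrightarrow> skey s u < skey s x' \<longrightarrow> u \<in> sstable s"
      by (simp add: resume_ok_def)
    show "u \<in> sstable s"
    proof (cases "skey s u \<le> skey s x")
      case True
      then show ?thesis using unstable_queued[OF u(1)] late by force
    next
      case False
      then show ?thesis using between u G_eq y by auto
    qed
  qed
  ultimately show ?thesis using K Fr St U
    by (simp add: slr_invariant_def stable_solved_def unstable_scheduled_def)
qed

lemma slr_invariant_step: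
  assumes inv: "slr_invariant box f x0 cs s" and step: "slr_step box f \<rho>0 (cs, s) = Some (cs', s')"
  shows "slr_invariant box f x0 cs' s'"
proof (cases cs)
  case Nil
  then show ?thesis using step by simp
next
  case (Cons F rest)
  show ?thesis
  proof (cases F)
    case (FSolve x)
    then show ?thesis using inv step Cons
      by (cases "x \<in> sstable s") (auto intro: slr_invariant_solve_stable slr_invariant_solve_unstable)
  next
    case (FTree x old t)
    show ?thesis
    proof (cases t)
      case (Return v)
      show ?thesis
      proof (cases "box old v = srho s x")
        case True
        then show ?thesis using inv step Cons FTree Return by (auto intro: slr_invariant_return_unchanged)
      next
        case False
        then have "cs' = FLoop x # rest" "s' = update_value x (box old v) s"
          using step[unfolded Cons FTree Return slr_step_Return_changed[where box = box, OF False]] by simp_all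
        then show ?thesis using inv Cons FTree Return slr_invariant_return_changed by simp
      qed
    next
      case (Query y k)
      have P: "\<exists>P. evaluated_upto f s x (Query y k) P" "x \<in> sstable s" "old = srho s x"
        using inv Cons FTree Query by (auto simp: slr_invariant_def)
      then show ?thesis using inv step Cons FTree Query
        by (cases "y \<in> sdom s")
          (auto simp: Let_def intro: slr_invariant_query_new slr_invariant_advance)
    qed
  next
    case (FResume x old y k)
    have "resume_ok f s x old y k" "y \<in> sdom s"
      using inv Cons FResume by (auto simp: slr_invariant_def stack_ok_def)
    then show ?thesis using inv step Cons FResume
      by (auto simp: Let_def resume_ok_def intro: slr_invariant_advance)
  next
    case (FLoop x)
    then show ?thesis using inv step Cons
      by (cases "sQ s \<noteq> {} \<and> skey s (qmin s) \<le> skey s x")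
        (auto intro: slr_invariant_loop_push slr_invariant_loop_exit)
  qed
qed


lemma slr_invariant_start: "slr_invariant box f x0 (fst (slr_start \<rho>0 x0)) (snd (slr_start \<rho>0 x0))"
  by (auto simp: slr_start_def slr_invariant_def state_ok_def stack_ok_def stable_solved_def
      unstable_scheduled_def queue_below_loop_def stable_below_top_def)

lemma slr_invariant_exec:
  "slr_invariant box f x0 (fst c) (snd c) \<Longrightarrow>
     slr_invariant box f x0 (fst (slr_exec box f \<rho>0 n c)) (snd (slr_exec box f \<rho>0 n c))"
proof (induction n arbitrary: c)
  case (Suc n)
  show ?case
  proof (cases "slr_step box f \<rho>0 c")
    case (Some c')
    then have "slr_invariant box f x0 (fst c') (snd c')"
      using slr_invariant_step[OF Suc.prems, of \<rho>0 "fst c'" "snd c'"] by simp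
    then show ?thesis using Suc.IH Some by simp
  qed (use Suc.prems in simp)
qed simp

lemma slr_invariant_run: "slr_invariant box f x0 (fst (slr_run box f \<rho>0 x0 n)) (snd (slr_run box f \<rho>0 x0 n))"
  unfolding slr_run_def by (rule slr_invariant_exec[OF slr_invariant_start])

lemma partial_box_solution_of_empty_stack:
  assumes "slr_invariant box f x0 [] s"
  shows "partial_box_solution box f (sdom s) (srho s) \<and> x0 \<in> sdom s"
proof -
  have "sQ s = {}" using assms by (auto simp: slr_invariant_def queue_below_loop_def)
  then have "sdom s \<subseteq> sstable s" using assms by (auto simp: slr_invariant_def unstable_scheduled_def)
  then show ?thesis
    using assms by (auto simp: slr_invariant_def stable_solved_def solved_at_def partial_box_solution_def
        state_ok_def)
qed

theorem slr_finished_partial_box_solution: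
  "slr_finished box f \<rho>0 x0 n \<Longrightarrow>
     (let s = snd (slr_run box f \<rho>0 x0 n) in partial_box_solution box f (sdom s) (srho s) \<and> x0 \<in> sdom s)"
  using slr_invariant_run[of box f x0 \<rho>0 n] partial_box_solution_of_empty_stack
  unfolding slr_finished_def Let_def by metis


section \<open>Sequences of \<open>\<boxdot>\<close>-updates\<close>

lemma boxdot_fixpoint_post: "is_widening wid \<Longrightarrow> a = boxdot wid nar a b \<Longrightarrow> b \<le> a"
  unfolding boxdot_def is_widening_def by metis

lemma mono_finite_Union_stabilises:
  fixes A :: "nat \<Rightarrow> 'a set"
  assumes mono: "mono A" and fin: "finite (\<Union>n. A n)"
  shows "\<exists>N. \<forall>n\<ge>N. A n = A N"
proof -
  obtain g where g: "\<forall>u\<in>(\<Union>n. A n). u \<in> A (g u)" by (metis UN_E)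
  define N where "N = Max (g ` (\<Union>n. A n))"
  have "\<forall>u\<in>(\<Union>n. A n). u \<in> A N"
    using g fin monoD[OF mono] unfolding N_def by (meson Max_ge finite_imageI image_eqI subsetD)
  then have "\<forall>n\<ge>N. A n = A N" using monoD[OF mono] by blast
  then show ?thesis by blast
qed

lemma constant_between:
  assumes "m \<le> n" "\<And>k. m \<le> k \<Longrightarrow> k < n \<Longrightarrow> a (Suc k) = a k"
  shows "a n = a m"
  using assms by (induction n rule: dec_induct) auto

lemma widening_no_infinite_chain:
  "is_widening wid \<Longrightarrow> (\<And>i. a (Suc i) = wid (a i) (b i) \<and> a (Suc i) \<noteq> a i) \<Longrightarrow> False"
  unfolding is_widening_def by blast

lemma narrowing_no_infinite_chain:
  "is_narrowing nar \<Longrightarrow> (\<And>i. b i \<le> a i \<and> a (Suc i) = nar (a i) (b i) \<and> a (Suc i) \<noteq> a i) \<Longrightarrow> False"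
  unfolding is_narrowing_def by blast

lemma constant_between_enumerate:
  assumes keep: "\<And>n. n \<notin> U \<Longrightarrow> a (Suc n) = a n"
    and V: "infinite V" "V \<subseteq> U" "\<forall>m\<in>V. \<forall>k\<in>U. m \<le> k \<longrightarrow> k \<in> V"
  shows "a (enumerate V (Suc j)) = a (Suc (enumerate V j))"
proof -
  let ?p = "enumerate V j" and ?q = "enumerate V (Suc j)"
  have p: "?p \<in> V" "?p < ?q" by (simp_all add: enumerate_in_set enumerate_step V(1))
  have gap: "k \<notin> U" if k: "Suc ?p \<le> k" "k < ?q" for k
  proof
    assume "k \<in> U"
    then have "k \<in> V \<and> ?p < k" using V(3) p(1) k(1) by auto
    then have "?q \<le> k" unfolding enumerate_Suc''[OF V(1)] by (rule Least_le)
    then show False using k(2) by simp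
  qed
  show ?thesis by (rule constant_between[of "Suc ?p" ?q a]) (use keep gap p(2) in auto)
qed

text \<open>A value that is changed by \<open>\<boxdot>\<close> infinitely often, where narrowing steps are never followed by
  widening steps, would give an infinite widening or an infinite narrowing sequence.\<close>
lemma boxdot_updates_finite:
  fixes a b :: "nat \<Rightarrow> 'd::order"
  assumes W: "is_widening wid" and N: "is_narrowing nar"
    and update: "\<And>n. n \<in> U \<Longrightarrow> a (Suc n) = boxdot wid nar (a n) (b n) \<and> a (Suc n) \<noteq> a n"
    and keep: "\<And>n. n \<notin> U \<Longrightarrow> a (Suc n) = a n"
    and persist: "\<And>n m. n \<in> U \<Longrightarrow> b n \<le> a n \<Longrightarrow> m \<in> U \<Longrightarrow> n < m \<Longrightarrow> b m \<le> a m"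
  shows "finite U"
proof (rule ccontr)
  assume inf: "infinite U"
  have step: "a (enumerate V (Suc j)) = boxdot wid nar (a (enumerate V j)) (b (enumerate V j)) \<and>
      a (enumerate V (Suc j)) \<noteq> a (enumerate V j)"
    if V: "infinite V" "V \<subseteq> U" "\<forall>m\<in>V. \<forall>k\<in>U. m \<le> k \<longrightarrow> k \<in> V" for V j
  proof -
    have "enumerate V j \<in> U" using enumerate_in_set[OF V(1)] V(2) by blast
    then show ?thesis using update constant_between_enumerate[where a = a, OF keep V] by metis
  qed
  show False
  proof (cases "\<exists>n\<in>U. b n \<le> a n")
    case True
    then obtain n where n: "n \<in> U" "b n \<le> a n" by blast
    define V where "V = {m\<in>U. n \<le> m}"
    have "U \<subseteq> V \<union> {..<n}" unfolding V_def by auto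
    then have V: "infinite V" using inf by (meson finite_Un finite_lessThan finite_subset)
    have VU: "V \<subseteq> U" and closed: "\<forall>m\<in>V. \<forall>k\<in>U. m \<le> k \<longrightarrow> k \<in> V"
      unfolding V_def by auto
    have narrow: "b (enumerate V j) \<le> a (enumerate V j)" for j
    proof -
      have "enumerate V j \<in> U" "n \<le> enumerate V j" using enumerate_in_set[OF V, of j] by (simp_all add: V_def)
      then show ?thesis using n persist[of n "enumerate V j"] by (cases "enumerate V j = n") auto
    qed
    have "b (enumerate V j) \<le> a (enumerate V j) \<and>
        a (enumerate V (Suc j)) = nar (a (enumerate V j)) (b (enumerate V j)) \<and>
        a (enumerate V (Suc j)) \<noteq> a (enumerate V j)" for j
      using step[OF V VU closed, of j] narrow[of j] unfolding boxdot_def by metis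
    then show False
      by (rule narrowing_no_infinite_chain[OF N, where a = "\<lambda>j. a (enumerate V j)"
            and b = "\<lambda>j. b (enumerate V j)"])
  next
    case False
    have "\<forall>m\<in>U. \<forall>k\<in>U. m \<le> k \<longrightarrow> k \<in> U" by blast
    then have "a (enumerate U (Suc j)) = wid (a (enumerate U j)) (b (enumerate U j)) \<and>
        a (enumerate U (Suc j)) \<noteq> a (enumerate U j)" for j
      using step[OF inf order_refl, of j] False enumerate_in_set[OF inf, of j] unfolding boxdot_def by metis
    then show False
      by (rule widening_no_infinite_chain[OF W, where a = "\<lambda>j. a (enumerate U j)"
            and b = "\<lambda>j. b (enumerate U j)"])
  qed
qed

lemma narrowing_update_preserves_post:
  fixes f :: "'x \<Rightarrow> ('x, 'd::order) qtree"
  assumes M: "\<forall>x. monotonic_rhs (f x)" and N: "is_narrowing nar"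
    and y: "tval \<rho> (f y) \<le> \<rho> y" and others: "\<forall>u\<in>D - {y}. tval \<rho> (f u) \<le> \<rho> u"
    and u: "u \<in> D"
  shows "tval (\<rho>(y := nar (\<rho> y) (tval \<rho> (f y)))) (f u) \<le> (\<rho>(y := nar (\<rho> y) (tval \<rho> (f y)))) u"
    (is "tval ?\<rho> (f u) \<le> ?\<rho> u")
proof -
  have nb: "tval \<rho> (f y) \<le> nar (\<rho> y) (tval \<rho> (f y))" "nar (\<rho> y) (tval \<rho> (f y)) \<le> \<rho> y"
    using N y unfolding is_narrowing_def by blast+
  then have "\<forall>z. ?\<rho> z \<le> \<rho> z" by simp
  then have "tval ?\<rho> (f u) \<le> tval \<rho> (f u)" using M unfolding monotonic_rhs_def by blast
  then show ?thesis using nb(1) others u by (cases "u = y") (auto intro: order_trans)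
qed


section \<open>Termination\<close>

inductive_set subtree :: "(('x, 'd) qtree \<times> ('x, 'd) qtree) set" where
  "(k d, Query y k) \<in> subtree"

lemma wf_subtree: "wf subtree"
proof (rule wfUNIVI)
  fix P :: "('x, 'd) qtree \<Rightarrow> bool" and t
  assume IH: "\<forall>t. (\<forall>t'. (t', t) \<in> subtree \<longrightarrow> P t') \<longrightarrow> P t"
  show "P t"
  proof (induction t)
    case (Return d)
    then show ?case using IH by (auto elim: subtree.cases)
  next
    case (Query y k)
    have "\<forall>t'. (t', Query y k) \<in> subtree \<longrightarrow> P t'" using Query.IH by (auto elim: subtree.cases)
    then show ?case using IH by blast
  qed
qed

fun active_tree :: "('x, 'd) frame list \<Rightarrow> ('x, 'd) qtree" where
  "active_tree (FTree x old t # cs) = t"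
| "active_tree (FResume x old y k # cs) = Query y k"
| "active_tree _ = Return undefined"

definition slr_measure :: "(('x, 'd) config \<times> ('x, 'd) config) set" where
  "slr_measure = inv_image (less_than <*lex*> less_than <*lex*> less_than <*lex*> subtree)
     (\<lambda>(cs, s). (card (sQ s), card (sdom s - sstable s), length cs, active_tree cs))"

lemma wf_slr_measure: "wf slr_measure"
  unfolding slr_measure_def by (intro wf_inv_image wf_lex_prod wf_less_than wf_subtree)

definition updates_at :: "('d \<Rightarrow> 'd \<Rightarrow> 'd) \<Rightarrow> ('x, 'd) frame list \<Rightarrow> ('x, 'd) slr_state \<Rightarrow> 'x \<Rightarrow> bool" where
  "updates_at box cs s y \<longleftrightarrow> (\<exists>old v rest. cs = FTree y old (Return v) # rest \<and> box old v \<noteq> srho s y)"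

lemma slr_step_defined: "cs \<noteq> [] \<Longrightarrow> \<exists>c'. slr_step box f \<rho>0 (cs, s) = Some c'"
proof -
  assume "cs \<noteq> []"
  then obtain F rest where cs: "cs = F # rest" by (cases cs) auto
  show ?thesis
  proof (cases F)
    case (FTree x old t)
    then show ?thesis using cs by (cases t) (auto simp: Let_def)
  qed (use cs in \<open>auto simp: Let_def\<close>)
qed

lemma slr_step_dom_mono:
  assumes "slr_step box f \<rho>0 (cs, s) = Some (cs', s')"
  shows "sdom s \<subseteq> sdom s'"
proof (cases cs)
  case (Cons F rest)
  show ?thesis
  proof (cases F)
    case (FTree x old t)
    then show ?thesis using assms Cons by (cases t) (auto simp: Let_def split: if_splits)
  qed (use assms Cons in \<open>auto simp: Let_def split: if_splits\<close>)
qed (use assms in simp)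

lemma slr_step_same_dom:
  assumes "slr_step box f \<rho>0 (cs, s) = Some (cs', s')" "sdom s' = sdom s"
  shows "skey s' = skey s \<and> (srho s' = srho s \<or> (\<exists>y. updates_at box cs s y))"
proof (cases cs)
  case (Cons F rest)
  show ?thesis
  proof (cases F)
    case (FTree x old t)
    then show ?thesis using assms Cons by (cases t) (auto simp: Let_def updates_at_def split: if_splits)
  qed (use assms Cons in \<open>auto simp: Let_def updates_at_def split: if_splits\<close>)
qed (use assms in simp)

lemma slr_step_update:
  assumes inv: "slr_invariant box f x0 cs s" and upd: "updates_at box cs s y"
    and step: "slr_step box f \<rho>0 (cs, s) = Some (cs', s')"
  shows "srho s' = (srho s)(y := box (srho s y) (tval (srho s) (f y))) \<and>
    box (srho s y) (tval (srho s) (f y)) \<noteq> srho s y \<and> y \<in> sdom s"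
proof -
  obtain old v rest where cs: "cs = FTree y old (Return v) # rest" and changed: "box old v \<noteq> srho s y"
    using upd unfolding updates_at_def by blast
  obtain P where old: "old = srho s y" and P: "evaluated_upto f s y (Return v) P"
    using inv cs by (auto simp: slr_invariant_def)
  have "tval (srho s) (f y) = v"
    using query_path_tval_tdep[of "srho s" "f y" "Return v" P] P by (simp add: evaluated_upto_def)
  moreover have "y \<in> sdom s" using inv cs by (simp add: slr_invariant_def stack_ok_def)
  moreover have "s' = update_value y (box old v) s"
    using step[unfolded cs slr_step_Return_changed[where box = box, OF changed]] by simp
  ultimately show ?thesis using old changed by simp
qed

lemma slr_step_decreases:
  assumes inv: "slr_invariant box f x0 cs s" and step: "slr_step box f \<rho>0 (cs, s) = Some (cs', s')"
    and same_dom: "sdom s' = sdom s" and no_update: "\<not> (\<exists>y. updates_at box cs s y)"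
  shows "((cs', s'), (cs, s)) \<in> slr_measure"
proof (cases cs)
  case (Cons F rest)
  have K: "state_ok x0 s" and dom: "\<forall>G\<in>set cs. frame_unknowns G \<subseteq> sdom s"
    using inv by (simp_all add: slr_invariant_def stack_ok_def)
  have fq: "finite (sQ s)" and fd: "finite (sdom s - sstable s)"
    using K finite_subset by (auto simp: state_ok_def)
  show ?thesis
  proof (cases F)
    case (FSolve x)
    show ?thesis
    proof (cases "x \<in> sstable s")
      case False
      have "x \<in> sdom s" using dom Cons FSolve by simp
      then have "sdom s - insert x (sstable s) \<subset> sdom s - sstable s" using False by blast
      then have "card (sdom s - insert x (sstable s)) < card (sdom s - sstable s)"
        using fd psubset_card_mono by blast
      then show ?thesis using step Cons FSolve False by (auto simp: slr_measure_def)
    qed (use step Cons FSolve in \<open>simp add: slr_measure_def\<close>)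
  next
    case (FTree x old t)
    show ?thesis
    proof (cases t)
      case (Return v)
      then have "box old v = srho s x" using no_update Cons FTree by (auto simp: updates_at_def)
      then show ?thesis using step Cons FTree Return by (simp add: slr_measure_def)
    next
      case (Query y k)
      have "y \<in> sdom s"
      proof (rule ccontr)
        assume "y \<notin> sdom s"
        then have "sdom s' = insert y (sdom s)" using step Cons FTree Query by auto
        then show False using same_dom \<open>y \<notin> sdom s\<close> by auto
      qed
      then show ?thesis using step Cons FTree Query
        by (auto simp: slr_measure_def Let_def subtree.intros)
    qed
  next
    case (FResume x old y k)
    then show ?thesis using step Cons by (auto simp: slr_measure_def Let_def subtree.intros)
  next
    case (FLoop x)
    show ?thesis
    proof (cases "sQ s \<noteq> {} \<and> skey s (qmin s) \<le> skey s x")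
      case True
      then have "card (sQ s - {qmin s}) < card (sQ s)"
        using qmin_minimal[OF fq] fq by (meson card_Diff1_less)
      then show ?thesis using step Cons FLoop True by (auto simp: slr_measure_def)
    next
      case False
      then show ?thesis using step Cons FLoop by (auto simp: slr_measure_def split: if_splits)
    qed
  qed
qed (use step in simp)

lemma slr_exec_Suc:
  "slr_exec box f \<rho>0 (Suc n) c =
     (case slr_step box f \<rho>0 (slr_exec box f \<rho>0 n c) of None \<Rightarrow> slr_exec box f \<rho>0 n c | Some c' \<Rightarrow> c')"
proof (induction n arbitrary: c)
  case 0
  then show ?case by (cases "slr_step box f \<rho>0 c") auto
next
  case (Suc n)
  show ?case
  proof (cases "slr_step box f \<rho>0 c")
    case None
    then have "slr_exec box f \<rho>0 m c = c" for m by (cases m) auto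
    then show ?thesis using None by simp
  next
    case (Some c')
    then have e1: "slr_exec box f \<rho>0 (Suc (Suc n)) c = slr_exec box f \<rho>0 (Suc n) c'"
      and e2: "slr_exec box f \<rho>0 (Suc n) c = slr_exec box f \<rho>0 n c'" by simp_all
    show ?thesis unfolding e1 e2 using Suc.IH[of c'] by simp
  qed
qed


lemma slr_run_Suc:
  "slr_run box f \<rho>0 x0 (Suc n) =
     (case slr_step box f \<rho>0 (slr_run box f \<rho>0 x0 n) of None \<Rightarrow> slr_run box f \<rho>0 x0 n | Some c \<Rightarrow> c)"
  unfolding slr_run_def by (rule slr_exec_Suc)


locale slr_boxdot_run =
  fixes wid nar :: "'e::order \<Rightarrow> 'e \<Rightarrow> 'e" and f :: "'y \<Rightarrow> ('y, 'e) qtree"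
    and \<rho>0 :: "'y \<Rightarrow> 'e" and x0 :: 'y
  assumes widening: "is_widening wid" and narrowing: "is_narrowing nar"
    and monotonic: "\<forall>x. monotonic_rhs (f x)"
    and finite_dom: "finite (\<Union>n. sdom (snd (slr_run (boxdot wid nar) f \<rho>0 x0 n)))"
begin

abbreviation stack :: "nat \<Rightarrow> ('y, 'e) frame list" where
  "stack n \<equiv> fst (slr_run (boxdot wid nar) f \<rho>0 x0 n)"

abbreviation state :: "nat \<Rightarrow> ('y, 'e) slr_state" where
  "state n \<equiv> snd (slr_run (boxdot wid nar) f \<rho>0 x0 n)"

abbreviation updates :: "'y \<Rightarrow> nat \<Rightarrow> bool" where
  "updates y n \<equiv> updates_at (boxdot wid nar) (stack n) (state n) y"

abbreviation rhs_value :: "'y \<Rightarrow> nat \<Rightarrow> 'e" where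
  "rhs_value y n \<equiv> tval (srho (state n)) (f y)"

lemma invariant: "slr_invariant (boxdot wid nar) f x0 (stack n) (state n)"
  by (rule slr_invariant_run)

lemma step_taken:
  assumes "stack n \<noteq> []"
  shows "slr_step (boxdot wid nar) f \<rho>0 (stack n, state n) = Some (stack (Suc n), state (Suc n))"
proof -
  obtain c' where "slr_step (boxdot wid nar) f \<rho>0 (stack n, state n) = Some c'"
    using slr_step_defined[OF assms] by blast
  then show ?thesis by (simp add: slr_run_Suc)
qed

lemma stopped:
  assumes "stack n = []"
  shows "state (Suc n) = state n"
proof -
  obtain s where "slr_run (boxdot wid nar) f \<rho>0 x0 n = ([], s)" using assms by (metis prod.collapse)
  then show ?thesis by (simp add: slr_run_Suc)
qed

lemma dom_Suc: "sdom (state n) \<subseteq> sdom (state (Suc n))"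
  using stopped[of n] slr_step_dom_mono[OF step_taken, of n] by (cases "stack n = []") auto

definition settle_time :: nat where
  "settle_time = (SOME N. \<forall>n\<ge>N. sdom (state n) = sdom (state N))"

abbreviation final_dom :: "'y set" where
  "final_dom \<equiv> sdom (state settle_time)"

abbreviation final_key :: "'y \<Rightarrow> int" where
  "final_key \<equiv> skey (state settle_time)"

lemma dom_settled: "settle_time \<le> n \<Longrightarrow> sdom (state n) = final_dom"
proof -
  have "mono (\<lambda>n. sdom (state n))" unfolding mono_iff_le_Suc using dom_Suc by blast
  from someI_ex[OF mono_finite_Union_stabilises[OF this finite_dom]]
  show "settle_time \<le> n \<Longrightarrow> sdom (state n) = final_dom" unfolding settle_time_def by blast
qed

lemma key_settled: "settle_time \<le> n \<Longrightarrow> skey (state n) = final_key"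
proof (induction n rule: dec_induct)
  case (step n)
  have "sdom (state (Suc n)) = sdom (state n)" using dom_settled[of n] dom_settled[of "Suc n"] step(1) by simp
  have "skey (state (Suc n)) = skey (state n)"
  proof (cases "stack n = []")
    case False
    with \<open>sdom (state (Suc n)) = sdom (state n)\<close> show ?thesis
      using slr_step_same_dom[OF step_taken[OF False]] by blast
  qed (use stopped in simp)
  then show ?case using step.IH by simp
qed simp

lemma update_effect:
  assumes "updates y n"
  shows "srho (state (Suc n)) = (srho (state n))(y := boxdot wid nar (srho (state n) y) (rhs_value y n)) \<and>
    boxdot wid nar (srho (state n) y) (rhs_value y n) \<noteq> srho (state n) y \<and> y \<in> sdom (state n)"
proof -
  have "stack n \<noteq> []" using assms by (auto simp: updates_at_def)
  then show ?thesis using slr_step_update[OF invariant assms step_taken] by blast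
qed

lemma value_kept:
  assumes n: "settle_time \<le> n" and "\<not> updates y n"
  shows "srho (state (Suc n)) y = srho (state n) y"
proof (cases "stack n = []")
  case False
  have "sdom (state (Suc n)) = sdom (state n)" using dom_settled[of n] dom_settled[of "Suc n"] n by simp
  then consider z where "updates z n" | "srho (state (Suc n)) = srho (state n)"
    using slr_step_same_dom[OF step_taken[OF False]] by blast
  then show ?thesis
  proof cases
    case 1
    then have "z \<noteq> y" using assms(2) by blast
    then show ?thesis using update_effect[OF 1] by simp
  qed simp
qed (use stopped in simp)

lemma finished_if_finitely_many_updates:
  assumes fin: "finite {n. \<exists>y. updates y n}"
  shows "\<exists>n. stack n = []"
proof (rule ccontr)
  assume running: "\<nexists>n. stack n = []"
  obtain B where B: "\<forall>n\<in>{n. \<exists>y. updates y n}. n < B" using fin finite_nat_set_iff_bounded by auto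
  define g where "g i = (stack (max settle_time B + i), state (max settle_time B + i))" for i
  have "(g (Suc i), g i) \<in> slr_measure" for i
  proof -
    let ?n = "max settle_time B + i"
    have "sdom (state (Suc ?n)) = sdom (state ?n)" using dom_settled[of ?n] dom_settled[of "Suc ?n"] by simp
    moreover have "\<not> (\<exists>y. updates y ?n)" using B by fastforce
    ultimately show ?thesis
      using slr_step_decreases[OF invariant step_taken] running unfolding g_def by auto
  qed
  then show False using wf_slr_measure unfolding wf_iff_no_infinite_down_chain by blast
qed

definition post_upto :: "int \<Rightarrow> nat \<Rightarrow> bool" where
  "post_upto \<kappa> n \<longleftrightarrow> (\<forall>u\<in>final_dom. final_key u \<le> \<kappa> \<longrightarrow> rhs_value u n \<le> srho (state n) u)"

lemma post_upto_narrowing_update: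
  assumes y: "updates y n" "rhs_value y n \<le> srho (state n) y"
    and others: "\<forall>u\<in>final_dom. final_key u \<le> \<kappa> \<longrightarrow> u \<noteq> y \<longrightarrow> rhs_value u n \<le> srho (state n) u"
  shows "post_upto \<kappa> (Suc n)"
proof -
  have "srho (state (Suc n)) = (srho (state n))(y := nar (srho (state n) y) (rhs_value y n))"
    using update_effect[OF y(1)] y(2) by (simp add: boxdot_def)
  then show ?thesis
    using narrowing_update_preserves_post[OF monotonic narrowing y(2),
        of "{u\<in>final_dom. final_key u \<le> \<kappa>}"] others
    by (simp add: post_upto_def)
qed

lemma post_upto_Suc:
  assumes n: "settle_time \<le> n" and below: "\<forall>y. updates y n \<longrightarrow> final_key y \<le> \<kappa>"
    and post: "post_upto \<kappa> n"
  shows "post_upto \<kappa> (Suc n)"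
proof (cases "\<exists>y. updates y n")
  case True
  then obtain y where y: "updates y n" by blast
  have "y \<in> final_dom" using update_effect[OF y] dom_settled[OF n] by simp
  then have "rhs_value y n \<le> srho (state n) y" using post below y by (simp add: post_upto_def)
  then show ?thesis using post by (intro post_upto_narrowing_update[OF y]) (auto simp: post_upto_def)
next
  case False
  then have "srho (state (Suc n)) = srho (state n)" using value_kept[OF n] by (intro ext) blast
  then show ?thesis using post by (simp add: post_upto_def)
qed

text \<open>When \<open>x\<close> is being updated, all younger unknowns are stable and not under evaluation, so by
  the invariant they satisfy their equations and are post solved.\<close>
lemma post_upto_after_narrowing:
  assumes n: "settle_time \<le> n" and x: "updates x n" "rhs_value x n \<le> srho (state n) x"
  shows "post_upto (final_key x) (Suc n)"
proof (rule post_upto_narrowing_update[OF x], intro ballI impI)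
  fix u assume u: "u \<in> final_dom" "final_key u \<le> final_key x" "u \<noteq> x"
  obtain old v rest where cs: "stack n = FTree x old (Return v) # rest"
    using x(1) by (auto simp: updates_at_def)
  have inv: "slr_invariant (boxdot wid nar) f x0 (stack n) (state n)" by (rule invariant)
  have key: "skey (state n) = final_key" and dom: "sdom (state n) = final_dom"
    using key_settled[OF n] dom_settled[OF n] .
  have "valid_stack (skey (state n)) x0 (stack n)" using inv by (simp add: slr_invariant_def stack_ok_def)
  then have vs: "valid_stack final_key x0 (FTree x old (Return v) # rest)" unfolding cs key .
  have "x \<in> final_dom" using update_effect[OF x(1)] dom by simp
  then have less: "final_key u < final_key x"
    using inv u key dom by (auto simp: slr_invariant_def state_ok_def inj_on_def)
  then have stable: "u \<in> sstable (state n)"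
    using inv cs key dom u(1) by (auto simp: slr_invariant_def stable_below_top_def)
  have "u \<notin> evaluating (stack n)"
  proof
    assume "u \<in> evaluating (stack n)"
    then obtain o' y' k' where "FResume u o' y' k' \<in> set rest"
      using cs u(3) valid_stack_no_FTree[OF vs] by (auto simp: evaluating_def)
    then show False using valid_stack_FResume[OF vs] less by fastforce
  qed
  then have "solved_at (boxdot wid nar) f (state n) u"
    using inv stable by (auto simp: slr_invariant_def stable_solved_def)
  then show "rhs_value u n \<le> srho (state n) u"
    using boxdot_fixpoint_post[OF widening] by (auto simp: solved_at_def)
qed

lemma finite_final_dom: "finite final_dom"
proof -
  have "final_dom \<subseteq> (\<Union>n. sdom (state n))" by (rule UN_upper) (rule UNIV_I)
  then show ?thesis using finite_dom by (rule finite_subset)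
qed

lemma infinitely_updated_in_final_dom:
  assumes "infinite {n. updates z n}"
  shows "z \<in> final_dom"
proof -
  obtain n where n: "updates z n" "settle_time \<le> n"
    using assms unfolding infinite_nat_iff_unbounded_le by blast
  then have "z \<in> sdom (state n)" using update_effect[OF n(1)] by blast
  then show ?thesis using dom_settled[OF n(2)] by simp
qed

lemma eventually_no_updates_above:
  assumes "\<forall>z\<in>final_dom. \<kappa> < final_key z \<longrightarrow> finite {n. updates z n}"
  obtains N where "settle_time \<le> N" "\<And>n z. N \<le> n \<Longrightarrow> updates z n \<Longrightarrow> final_key z \<le> \<kappa>"
proof -
  have "finite (\<Union>z\<in>{z\<in>final_dom. \<kappa> < final_key z}. {n. updates z n})"
    using assms finite_final_dom by simp
  then obtain B where B: "\<forall>n\<in>(\<Union>z\<in>{z\<in>final_dom. \<kappa> < final_key z}. {n. updates z n}). n < B"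
    using finite_nat_set_iff_bounded by blast
  show thesis
  proof (rule that[of "max settle_time B"])
    fix n z assume n: "max settle_time B \<le> n" and z: "updates z n"
    have "z \<in> final_dom" using update_effect[OF z] dom_settled[of n] n by simp
    moreover have "\<not> n < B" using n by simp
    ultimately show "final_key z \<le> \<kappa>" using B z by force
  qed simp
qed

lemma post_upto_persists:
  assumes quiet: "settle_time \<le> N" "\<And>n z. N \<le> n \<Longrightarrow> updates z n \<Longrightarrow> final_key z \<le> final_key x"
    and n: "N \<le> n" "updates x n" "rhs_value x n \<le> srho (state n) x" and m: "Suc n \<le> m"
  shows "post_upto (final_key x) m"
  using m
proof (induction m rule: dec_induct)
  case base
  show ?case using n quiet(1) by (intro post_upto_after_narrowing) simp_all
next
  case (step m)
  have "N \<le> m" using n(1) step(1) by simp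
  then have "settle_time \<le> m" "\<forall>z. updates z m \<longrightarrow> final_key z \<le> final_key x"
    using quiet by auto
  then show ?case using post_upto_Suc step.IH by blast
qed

lemma finite_shifted_nat_set: "finite {n. P (N + n)} \<Longrightarrow> finite {n::nat. P n}"
proof -
  assume "finite {n. P (N + n)}"
  then have "finite ({..<N} \<union> (\<lambda>n. N + n) ` {n. P (N + n)})" by simp
  moreover have "{n. P n} \<subseteq> {..<N} \<union> (\<lambda>n. N + n) ` {n. P (N + n)}"
  proof
    fix n assume n: "n \<in> {n. P n}"
    show "n \<in> {..<N} \<union> (\<lambda>n. N + n) ` {n. P (N + n)}"
    proof (cases "n < N")
      case False
      then have "n = N + (n - N)" by simp
      then show ?thesis using n by (metis (mono_tags, lifting) UnI2 image_eqI mem_Collect_eq)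
    qed simp
  qed
  ultimately show ?thesis by (rule finite_subset[rotated])
qed

lemma finitely_updated_if_older_quiet:
  assumes quiet: "settle_time \<le> N" "\<And>n z. N \<le> n \<Longrightarrow> updates z n \<Longrightarrow> final_key z \<le> final_key x"
    and x: "x \<in> final_dom"
  shows "finite {n. updates x n}"
proof (rule finite_shifted_nat_set)
  show "finite {n. updates x (N + n)}"
  proof (rule boxdot_updates_finite[OF widening narrowing,
        where a = "\<lambda>n. srho (state (N + n)) x" and b = "\<lambda>n. rhs_value x (N + n)"])
    fix n assume "n \<in> {n. updates x (N + n)}"
    then show "srho (state (N + Suc n)) x = boxdot wid nar (srho (state (N + n)) x) (rhs_value x (N + n)) \<and>
        srho (state (N + Suc n)) x \<noteq> srho (state (N + n)) x"
      using update_effect by simp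
  next
    fix n assume "n \<notin> {n. updates x (N + n)}"
    then show "srho (state (N + Suc n)) x = srho (state (N + n)) x"
      using value_kept quiet(1) by simp
  next
    fix n m assume "n \<in> {n. updates x (N + n)}" "rhs_value x (N + n) \<le> srho (state (N + n)) x"
      "m \<in> {n. updates x (N + n)}" "n < m"
    then have "post_upto (final_key x) (N + m)" by (intro post_upto_persists[OF quiet, where n = "N + n"]) simp_all
    then show "rhs_value x (N + m) \<le> srho (state (N + m)) x" using x by (simp add: post_upto_def)
  qed
qed

lemma finitely_many_updates: "finite {n. updates y n}"
proof (rule ccontr)
  define X where "X = {z. infinite {n. updates z n}}"
  assume "infinite {n. updates y n}"
  then have "X \<noteq> {}" unfolding X_def by blast
  have "X \<subseteq> final_dom" using infinitely_updated_in_final_dom unfolding X_def by blast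
  then have fX: "finite X" using finite_final_dom by (rule finite_subset)
  have "Max (final_key ` X) \<in> final_key ` X"
    using \<open>X \<noteq> {}\<close> by (intro Max_in finite_imageI fX) simp
  then obtain x where x_Max: "Max (final_key ` X) = final_key x" and xX: "x \<in> X" by (rule imageE)
  have "z \<notin> X" if "final_key x < final_key z" for z
    using that fX unfolding x_Max[symmetric] by (auto simp: Max_ge leD)
  then have "\<forall>z\<in>final_dom. final_key x < final_key z \<longrightarrow> finite {n. updates z n}"
    unfolding X_def by blast
  then obtain N where "settle_time \<le> N" "\<And>n z. N \<le> n \<Longrightarrow> updates z n \<Longrightarrow> final_key z \<le> final_key x"
    using eventually_no_updates_above by blast
  then have "finite {n. updates x n}"
    using finitely_updated_if_older_quiet \<open>X \<subseteq> final_dom\<close> xX by blast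
  then show False using xX unfolding X_def by simp
qed

lemma eventually_finished: "\<exists>n. stack n = []"
proof (rule finished_if_finitely_many_updates)
  have "{n. \<exists>y. updates y n} \<subseteq> (\<Union>y\<in>(\<Union>n. sdom (state n)). {n. updates y n})"
    using update_effect by blast
  then show "finite {n. \<exists>y. updates y n}"
    using finite_dom finitely_many_updates by (meson finite_UN_I finite_subset)
qed

end

lemma partial_post_solution_of_boxdot:
  "is_widening wid \<Longrightarrow> partial_box_solution (boxdot wid nar) f D \<rho> \<Longrightarrow> partial_post_solution f D \<rho>"
  unfolding partial_box_solution_def partial_post_solution_def using boxdot_fixpoint_post by blast

theorem mainTheorem6:
  shows
   "(\<forall>(box :: 'd \<Rightarrow> 'd \<Rightarrow> 'd) (f :: 'x \<Rightarrow> ('x, 'd) qtree) \<rho>0 x0 n.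
       slr_finished box f \<rho>0 x0 n \<longrightarrow>
         (let s = snd (slr_run box f \<rho>0 x0 n) in
            partial_box_solution box f (sdom s) (srho s) \<and> x0 \<in> sdom s))
    \<and>
    (\<forall>(wid :: 'e::order \<Rightarrow> 'e \<Rightarrow> 'e) nar (f :: 'y \<Rightarrow> ('y, 'e) qtree) \<rho>0 x0.
       directed TYPE('e) \<longrightarrow> is_widening wid \<longrightarrow> is_narrowing nar \<longrightarrow>
       (\<forall>x. monotonic_rhs (f x)) \<longrightarrow>
       finite (\<Union>n. sdom (snd (slr_run (boxdot wid nar) f \<rho>0 x0 n))) \<longrightarrow>
       (\<exists>n. slr_finished (boxdot wid nar) f \<rho>0 x0 n \<and>
            (let s = snd (slr_run (boxdot wid nar) f \<rho>0 x0 n) in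
               partial_post_solution f (sdom s) (srho s) \<and> x0 \<in> sdom s)))"
proof (intro conjI allI impI)
  fix box :: "'d \<Rightarrow> 'd \<Rightarrow> 'd" and f :: "'x \<Rightarrow> ('x, 'd) qtree" and \<rho>0 x0 n
  assume "slr_finished box f \<rho>0 x0 n"
  then show "let s = snd (slr_run box f \<rho>0 x0 n) in partial_box_solution box f (sdom s) (srho s) \<and> x0 \<in> sdom s"
    by (rule slr_finished_partial_box_solution)
next
  fix wid nar :: "'e::order \<Rightarrow> 'e \<Rightarrow> 'e" and f :: "'y \<Rightarrow> ('y, 'e) qtree" and \<rho>0 x0
  assume W: "is_widening wid" and "is_narrowing nar" "\<forall>x. monotonic_rhs (f x)"
    "finite (\<Union>n. sdom (snd (slr_run (boxdot wid nar) f \<rho>0 x0 n)))"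
  then interpret slr_boxdot_run wid nar f \<rho>0 x0 by unfold_locales
  obtain n where "stack n = []" using eventually_finished by blast
  then have finished: "slr_finished (boxdot wid nar) f \<rho>0 x0 n" by (simp add: slr_finished_def)
  then show "\<exists>n. slr_finished (boxdot wid nar) f \<rho>0 x0 n \<and>
      (let s = snd (slr_run (boxdot wid nar) f \<rho>0 x0 n) in
         partial_post_solution f (sdom s) (srho s) \<and> x0 \<in> sdom s)"
    using slr_finished_partial_box_solution[OF finished] partial_post_solution_of_boxdot[OF W]
    by (intro exI[of _ n]) (auto simp: Let_def)
qed

end
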